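(* Let $(W,g,V)\in BT_n$. Let $a=\dim(W\cap V^\perp)$, $b=\dim(V\cap W^\perp)$, and let $c$ be the rank of the pairing $\langle-,-\rangle$ restricted to $(W\cap\mathbb{F}_q^n)\times(V\cap\mathbb{F}_q^n)$. Then there is $x\in GL_n(\mathbb{F}_q)$ with $x\cdot(W,g,V)=(W',g',V')$ where, writing $E_1=\mathrm{span}\{e_1,\dots,e_a\}$, $E_2=\mathrm{span}\{e_{a+1},\dots,e_{n-b-c}\}$, $E_3=\mathrm{span}\{e_{n-b-c+1},\dots,e_{n-c}\}$, $E_4=\mathrm{span}\{e_{n-c+1},e_{n-c+2},\dots\}$, we have $V'=E_3\oplus E_4$, $W'=E_1\oplus E_4$, and $g'$, as an element of $GL_n(\mathbb{F}_q)$ written in blocks of sizes $a,\,n-a-b-c,\,b,\,c$, has the form \[ \begin{bmatrix}\mathrm{Id}&0&0&0\\ C&A&0&0\\ D&B&\mathrm{Id}&0\\ 0&0&0&\mathrm{Id}\end{bmatrix} \] for some matrices $A,B,C,D$.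
   Context: $\mathbb{F}_q^\infty$ has basis $e_1,e_2,\dots$; $\mathbb{F}_q^n=\mathrm{span}\{e_1,\dots,e_n\}$. $GL_\infty(\mathbb{F}_q)=\varinjlim GL_n(\mathbb{F}_q)$ under $g\mapsto\operatorname{diag}(g,\mathrm{Id})$, i.e. invertible $\mathbb{Z}_{>0}\times\mathbb{Z}_{>0}$ matrices differing from the identity in finitely many entries; $g^T$ is the transpose. A subspace is smooth if it contains $e_i$ for all sufficiently large $i$. A bounding triple is $(W,g,V)$ with $W,V$ smooth, $g\in GL_\infty(\mathbb{F}_q)$, $g$ acting as identity on $V$ and $g^T$ acting as identity on $W$. $BT_n$ is the set of bounding triples with $e_{n+1},e_{n+2},\dots\in V\cap W$. $GL_\infty(\mathbb{F}_q)$ acts by $x\cdot(W,g,V)=(x^{-T}W,xgx^{-1},xV)$, $x^{-T}=(x^{-1})^T$. $\langle-,-\rangle$ is the bilinear pairing with $\langle e_i,e_j\rangle=\delta_{ij}$; $W^\perp=\{v:\langle w,v\rangle=0\ \forall w\in W\}$ and $V^\perp=\{w:\langle w,v\rangle=0\ \forall v\in V\}$. *)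

theory Defs
  imports Complex_Main "HOL-Library.Function_Algebras"
begin

text \<open>The field F_q is a type 'a of class field and finite.
Vectors of F_q^infinity are finitely supported functions nat => 'a.
INDEXING IS 0-BASED: the paper's basis vector e_i is ev (i - 1) here, so the
paper's F_q^n = span of e_1..e_n is span of ev 0 .. ev (n-1).
Matrices are functions nat => nat => 'a (entry in row i, column j).\<close>

definition fscale :: "'a::field \<Rightarrow> (nat \<Rightarrow> 'a) \<Rightarrow> (nat \<Rightarrow> 'a)" where
  "fscale c v = (\<lambda>i. c * v i)"

lemma vector_space_fscale: "vector_space (fscale :: 'a::field \<Rightarrow> _)"
  by unfold_locales (auto simp: fscale_def fun_eq_iff algebra_simps)

interpretation fs: vector_space "fscale :: 'a::field \<Rightarrow> (nat \<Rightarrow> 'a) \<Rightarrow> (nat \<Rightarrow> 'a)"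
  by (rule vector_space_fscale)

definition Finf :: "(nat \<Rightarrow> 'a::zero) set" where
  "Finf = {v. finite {i. v i \<noteq> 0}}"

definition ev :: "nat \<Rightarrow> nat \<Rightarrow> 'a::{zero,one}" where
  "ev i = (\<lambda>j. if j = i then 1 else 0)"

definition Fn :: "nat \<Rightarrow> (nat \<Rightarrow> 'a::field) set" where
  "Fn n = fs.span (ev ` {..<n})"

definition subsp :: "(nat \<Rightarrow> 'a::field) set \<Rightarrow> bool" where
  "subsp V \<longleftrightarrow> fs.subspace V \<and> V \<subseteq> Finf"

definition smooth :: "(nat \<Rightarrow> 'a::field) set \<Rightarrow> bool" where
  "smooth V \<longleftrightarrow> subsp V \<and> (\<exists>N. \<forall>i\<ge>N. ev i \<in> V)"

definition pair :: "(nat \<Rightarrow> 'a::field) \<Rightarrow> (nat \<Rightarrow> 'a) \<Rightarrow> 'a" where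
  "pair u v = (\<Sum>i\<in>{i. u i \<noteq> 0}. u i * v i)"

text \<open>W^perp = {v. <w,v> = 0 for all w in W} (right perp),
  V^perp = {w. <w,v> = 0 for all v in V} (left perp); both inside F_q^infinity.
  Since the pairing is symmetric these coincide as sets.\<close>
definition perpR :: "(nat \<Rightarrow> 'a::field) set \<Rightarrow> (nat \<Rightarrow> 'a) set" where
  "perpR W = {v \<in> Finf. \<forall>w\<in>W. pair w v = 0}"

definition perpL :: "(nat \<Rightarrow> 'a::field) set \<Rightarrow> (nat \<Rightarrow> 'a) set" where
  "perpL V = {w \<in> Finf. \<forall>v\<in>V. pair w v = 0}"

text \<open>Rank of the pairing restricted to A x B: the rank of the induced linear
  map B -> A^*, i.e. dim B minus the dimension of its kernel.\<close>
definition pairing_rank :: "(nat \<Rightarrow> 'a::field) set \<Rightarrow> (nat \<Rightarrow> 'a) set \<Rightarrow> nat" where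
  "pairing_rank A B = fs.dim B - fs.dim {v \<in> B. \<forall>w\<in>A. pair w v = 0}"

definition idm :: "nat \<Rightarrow> nat \<Rightarrow> 'a::{zero,one}" where
  "idm i j = (if i = j then 1 else 0)"

definition mmult :: "(nat \<Rightarrow> nat \<Rightarrow> 'a::field) \<Rightarrow> (nat \<Rightarrow> nat \<Rightarrow> 'a) \<Rightarrow> (nat \<Rightarrow> nat \<Rightarrow> 'a)" where
  "mmult g h = (\<lambda>i j. \<Sum>k\<in>{k. g i k \<noteq> 0}. g i k * h k j)"

definition mvec :: "(nat \<Rightarrow> nat \<Rightarrow> 'a::field) \<Rightarrow> (nat \<Rightarrow> 'a) \<Rightarrow> (nat \<Rightarrow> 'a)" where
  "mvec g v = (\<lambda>i. \<Sum>k\<in>{k. v k \<noteq> 0}. g i k * v k)"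

definition mtrans :: "(nat \<Rightarrow> nat \<Rightarrow> 'a) \<Rightarrow> (nat \<Rightarrow> nat \<Rightarrow> 'a)" where
  "mtrans g = (\<lambda>i j. g j i)"

definition finid :: "(nat \<Rightarrow> nat \<Rightarrow> 'a::{zero,one}) \<Rightarrow> bool" where
  "finid g \<longleftrightarrow> finite {(i, j). g i j \<noteq> idm i j}"

definition GLinf :: "(nat \<Rightarrow> nat \<Rightarrow> 'a::field) set" where
  "GLinf = {g. finid g \<and> (\<exists>h. finid h \<and> mmult g h = idm \<and> mmult h g = idm)}"

text \<open>GL_n(F_q), embedded in GL_infinity via g |-> diag(g, Id).\<close>
definition GLn :: "nat \<Rightarrow> (nat \<Rightarrow> nat \<Rightarrow> 'a::field) set" where
  "GLn n = {g \<in> GLinf. \<forall>i j. (n \<le> i \<or> n \<le> j) \<longrightarrow> g i j = idm i j}"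

definition minv :: "(nat \<Rightarrow> nat \<Rightarrow> 'a::field) \<Rightarrow> (nat \<Rightarrow> nat \<Rightarrow> 'a)" where
  "minv g = (THE h. finid h \<and> mmult g h = idm \<and> mmult h g = idm)"

definition bounding_triple ::
  "(nat \<Rightarrow> 'a::field) set \<Rightarrow> (nat \<Rightarrow> nat \<Rightarrow> 'a) \<Rightarrow> (nat \<Rightarrow> 'a) set \<Rightarrow> bool" where
  "bounding_triple W g V \<longleftrightarrow> smooth W \<and> smooth V \<and> g \<in> GLinf \<and>
     (\<forall>v\<in>V. mvec g v = v) \<and> (\<forall>w\<in>W. mvec (mtrans g) w = w)"

text \<open>BT_n: e_{n+1}, e_{n+2}, ... (0-based: ev n, ev (n+1), ...) lie in V and W.\<close>
definition BT :: "nat \<Rightarrow> ((nat \<Rightarrow> 'a::field) set \<times> (nat \<Rightarrow> nat \<Rightarrow> 'a) \<times> (nat \<Rightarrow> 'a) set) set" where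
  "BT n = {(W, g, V). bounding_triple W g V \<and> (\<forall>i\<ge>n. ev i \<in> V \<inter> W)}"

definition act ::
  "(nat \<Rightarrow> nat \<Rightarrow> 'a::field) \<Rightarrow> ((nat \<Rightarrow> 'a) set \<times> (nat \<Rightarrow> nat \<Rightarrow> 'a) \<times> (nat \<Rightarrow> 'a) set)
     \<Rightarrow> ((nat \<Rightarrow> 'a) set \<times> (nat \<Rightarrow> nat \<Rightarrow> 'a) \<times> (nat \<Rightarrow> 'a) set)" where
  "act x T = (case T of (W, g, V) \<Rightarrow>
     (mvec (mtrans (minv x)) ` W, mmult (mmult x g) (minv x), mvec x ` V))"

end

theory Submission
  imports Defs
begin

text \<open>
  Only the part of the triple inside \<open>F\<^sup>n\<close> matters. Put \<open>W0 = W \<inter> F\<^sup>n\<close> and \<open>V0 = V \<inter> F\<^sup>n\<close>.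
  Since \<open>V\<close> and \<open>W\<close> contain every \<open>e\<^sub>i\<close> with \<open>i \<ge> n\<close>, the spaces \<open>W \<inter> V\<^sup>\<perp>\<close> and
  \<open>V \<inter> W\<^sup>\<perp>\<close> are the two radicals of the pairing on \<open>W0 \<times> V0\<close>, so \<open>dim W0 = a + c\<close> and
  \<open>dim V0 = b + c\<close>. Choose an ordered basis \<open>f\<^sub>0, \<dots>, f\<^sub>n\<^sub>-\<^sub>1\<close> of \<open>F\<^sup>n\<close> whose last \<open>b + c\<close>
  vectors span \<open>V0\<close> and whose vectors \<open>f\<^sub>a, \<dots>, f\<^sub>n\<^sub>-\<^sub>c\<^sub>-\<^sub>1\<close> lie in \<open>W0\<^sup>\<perp>\<close> (possible
  because \<open>V0 + W0\<^sup>\<perp>\<close> has codimension \<open>a\<close>), and let \<open>r\<^sub>0, \<dots>, r\<^sub>n\<^sub>-\<^sub>1\<close> be the dual basis;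
  then \<open>W0\<close> is spanned by the \<open>r\<^sub>i\<close> with \<open>i < a\<close> or \<open>i \<ge> n - c\<close>. The matrix \<open>x\<close> with rows
  \<open>r\<^sub>i\<close> moves \<open>V\<close> and \<open>W\<close> onto the required coordinate subspaces, and entry \<open>(i, j)\<close> of
  \<open>x g x\<^sup>-\<^sup>1\<close> is \<open>\<langle>r\<^sub>i, g f\<^sub>j\<rangle>\<close>, which is \<open>\<delta>\<^sub>i\<^sub>j\<close> as soon as \<open>f\<^sub>j \<in> V\<close> (\<open>g\<close> fixes \<open>V\<close>)
  or \<open>r\<^sub>i \<in> W\<close> (\<open>g\<^sup>T\<close> fixes \<open>W\<close>).
\<close>

section \<open>Finitely supported vectors\<close>

lemma sum_fun_apply: "(\<Sum>i\<in>A. F i) x = (\<Sum>i\<in>A. F i x)"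
  by (induction A rule: infinite_finite_induct) auto

lemma fscale_apply [simp]: "fscale c v i = c * v i"
  by (simp add: fscale_def)

lemma subspace_Finf: "fs.subspace (Finf :: (nat \<Rightarrow> 'k::field) set)"
proof -
  have "finite {i. (x + y) i \<noteq> 0}" if "x \<in> Finf" "y \<in> Finf" for x y :: "nat \<Rightarrow> 'k"
    by (rule finite_subset[of _ "{i. x i \<noteq> 0} \<union> {i. y i \<noteq> 0}"]) (use that in \<open>auto simp: Finf_def\<close>)
  moreover have "finite {i. fscale c x i \<noteq> 0}" if "x \<in> Finf" for x :: "nat \<Rightarrow> 'k" and c
    by (rule finite_subset[of _ "{i. x i \<noteq> 0}"]) (use that in \<open>auto simp: Finf_def\<close>)
  ultimately show ?thesis
    unfolding fs.subspace_def by (auto simp: Finf_def)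
qed

lemma span_ev: "fs.span (ev ` J) = {z::nat \<Rightarrow> 'k::field. z \<in> Finf \<and> (\<forall>i. z i \<noteq> 0 \<longrightarrow> i \<in> J)}"
proof
  have sub: "fs.subspace {z::nat \<Rightarrow> 'k. z \<in> Finf \<and> (\<forall>i. z i \<noteq> 0 \<longrightarrow> i \<in> J)}"
    using subspace_Finf unfolding fs.subspace_def by (auto simp: fscale_def) (metis add.right_neutral)
  show "fs.span (ev ` J) \<subseteq> {z::nat \<Rightarrow> 'k. z \<in> Finf \<and> (\<forall>i. z i \<noteq> 0 \<longrightarrow> i \<in> J)}"
    by (rule fs.span_minimal[OF _ sub]) (auto simp: ev_def Finf_def split: if_splits)
next
  show "{z::nat \<Rightarrow> 'k. z \<in> Finf \<and> (\<forall>i. z i \<noteq> 0 \<longrightarrow> i \<in> J)} \<subseteq> fs.span (ev ` J)"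
  proof clarify
    fix z :: "nat \<Rightarrow> 'k" assume z: "z \<in> Finf" "\<forall>i. z i \<noteq> 0 \<longrightarrow> i \<in> J"
    let ?S = "{i. z i \<noteq> 0}"
    have "z = (\<Sum>i\<in>?S. fscale (z i) (ev i))"
      using z(1) by (auto simp: Finf_def sum_fun_apply ev_def if_distrib cong: if_cong)
    also have "\<dots> \<in> fs.span (ev ` J)"
      by (intro fs.span_sum fs.span_scale fs.span_base) (use z(2) in auto)
    finally show "z \<in> fs.span (ev ` J)" .
  qed
qed

lemma Fn_char: "Fn n = {z::nat \<Rightarrow> 'k::field. \<forall>i\<ge>n. z i = 0}"
proof -
  have "finite {i. z i \<noteq> 0}" if "\<forall>i\<ge>n. z i = 0" for z :: "nat \<Rightarrow> 'k"
    by (rule finite_subset[of _ "{..<n}"]) (use that in \<open>auto simp: not_le[symmetric]\<close>)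
  then show ?thesis
    unfolding Fn_def span_ev by (auto simp: Finf_def) (meson not_less)
qed

lemma Fn_subset_Finf: "Fn n \<subseteq> Finf"
  unfolding Fn_def span_ev by auto

lemma subspace_Fn: "fs.subspace (Fn n)"
  unfolding Fn_def by simp

lemma ev_in_Finf: "(ev j :: nat \<Rightarrow> 'k::field) \<in> Finf"
proof -
  have "{i. (ev j :: nat \<Rightarrow> 'k) i \<noteq> 0} = {j}" by (auto simp: ev_def)
  then show ?thesis by (simp add: Finf_def)
qed

lemma ev_in_Fn: "i < n \<Longrightarrow> (ev i :: nat \<Rightarrow> 'k::field) \<in> Fn n"
  by (simp add: Fn_char ev_def)

lemma Fn_eq_sum_ev: "z \<in> Fn n \<Longrightarrow> z = (\<Sum>k<n. fscale (z k) (ev k :: nat \<Rightarrow> 'k::field))"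
  by (rule ext) (auto simp: sum_fun_apply ev_def Fn_char if_distrib cong: if_cong)

lemma finite_Fn: "finite (Fn n :: (nat \<Rightarrow> 'k::{field,finite}) set)"
proof -
  let ?h = "\<lambda>z::nat \<Rightarrow> 'k. map z [0..<n]"
  have "inj_on ?h (Fn n)"
  proof
    fix x y :: "nat \<Rightarrow> 'k" assume xy: "x \<in> Fn n" "y \<in> Fn n" "?h x = ?h y"
    show "x = y"
    proof
      fix i show "x i = y i"
        using xy by (cases "i < n") (auto simp: Fn_char map_eq_conv)
    qed
  qed
  moreover have "?h ` Fn n \<subseteq> {xs. set xs \<subseteq> UNIV \<and> length xs = n}" by auto
  then have "finite (?h ` Fn n)"
    by (rule finite_subset) (rule finite_lists_length_eq, simp)
  ultimately show ?thesis by (metis finite_imageD)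
qed

definition tail :: "nat \<Rightarrow> (nat \<Rightarrow> 'k::field) \<Rightarrow> nat \<Rightarrow> 'k" where
  "tail n v = (\<lambda>i. if n \<le> i then v i else 0)"

lemma diff_tail_in_Fn: "v - tail n v \<in> Fn n"
  by (simp add: Fn_char tail_def)

lemma tail_in_subspace:
  fixes U :: "(nat \<Rightarrow> 'k::field) set"
  assumes "fs.subspace U" "\<forall>i\<ge>n. ev i \<in> U" "v \<in> Finf"
  shows "tail n v \<in> U"
proof -
  have "finite {i. tail n v i \<noteq> 0}"
    by (rule finite_subset[of _ "{i. v i \<noteq> 0}"]) (use assms(3) in \<open>auto simp: tail_def Finf_def\<close>)
  then have "tail n v \<in> fs.span (ev ` {n..})"
    unfolding span_ev by (auto simp: tail_def Finf_def)
  moreover have "fs.span (ev ` {n..}) \<subseteq> U"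
    by (rule fs.span_minimal[OF _ assms(1)]) (use assms(2) in auto)
  ultimately show ?thesis by blast
qed

section \<open>The pairing\<close>

lemma pair_eq_sum: "finite S \<Longrightarrow> {i. u i \<noteq> 0} \<subseteq> S \<Longrightarrow> pair u v = (\<Sum>i\<in>S. u i * v i)"
  unfolding pair_def by (rule sum.mono_neutral_left) auto

lemma pair_Fn_left: "u \<in> Fn n \<Longrightarrow> pair u v = (\<Sum>i<n. u i * v i)"
  by (rule pair_eq_sum) (auto simp: Fn_char not_less[symmetric])

lemma pair_commute:
  assumes "u \<in> Finf" "v \<in> Finf"
  shows "pair u v = pair v u"
proof -
  let ?S = "{i. u i \<noteq> 0} \<union> {i. v i \<noteq> 0}"
  have "pair u v = (\<Sum>i\<in>?S. u i * v i)" "pair v u = (\<Sum>i\<in>?S. v i * u i)"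
    by (rule pair_eq_sum; use assms in \<open>auto simp: Finf_def\<close>)+
  then show ?thesis by (simp add: mult.commute)
qed

lemma pair_add_right: "pair u (v + w) = pair u v + pair u w"
  by (simp add: pair_def distrib_left sum.distrib)

lemma pair_scale_right: "pair u (fscale c v) = c * pair u v"
  by (simp add: pair_def sum_distrib_left algebra_simps)

lemma pair_diff_right: "pair u (v - w) = pair u v - pair u w"
  by (simp add: pair_def algebra_simps sum_subtractf)

lemma pair_sum_right: "pair u (\<Sum>j\<in>A. F j) = (\<Sum>j\<in>A. pair u (F j))"
  unfolding pair_def sum_fun_apply by (simp add: sum_distrib_left sum.swap[of _ _ A])

lemma pair_zero_right [simp]: "pair u 0 = 0"
  by (simp add: pair_def)

lemma pair_ev_left [simp]: "pair (ev i) (v :: nat \<Rightarrow> 'k::field) = v i"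
proof -
  have "{j. (ev i :: nat \<Rightarrow> 'k) j \<noteq> 0} = {i}" by (auto simp: ev_def)
  then show ?thesis by (simp add: pair_def ev_def)
qed

lemma pair_ev_right: "u \<in> Finf \<Longrightarrow> pair u (ev j) = u j"
  using pair_commute[OF _ ev_in_Finf, of u j] by simp

lemma pair_add_left:
  "u \<in> Finf \<Longrightarrow> u' \<in> Finf \<Longrightarrow> v \<in> Finf \<Longrightarrow> pair (u + u') v = pair u v + pair u' v"
  using subspace_Finf pair_commute pair_add_right unfolding fs.subspace_def by metis

lemma pair_scale_left: "u \<in> Finf \<Longrightarrow> v \<in> Finf \<Longrightarrow> pair (fscale c u) v = c * pair u v"
  using subspace_Finf pair_commute pair_scale_right unfolding fs.subspace_def by metis

lemma pair_diff_left:
  assumes "u \<in> Finf" "u' \<in> Finf" "v \<in> Finf"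
  shows "pair (u - u') v = pair u v - pair u' v"
proof -
  have "u - u' \<in> Finf" using subspace_Finf assms(1,2) by (rule fs.subspace_diff)
  then have "pair (u - u') v = pair v (u - u')" using assms(3) by (rule pair_commute)
  also have "\<dots> = pair v u - pair v u'" by (rule pair_diff_right)
  also have "\<dots> = pair u v - pair u' v" using assms pair_commute by metis
  finally show ?thesis .
qed

lemma pair_tail: "u \<in> Fn n \<Longrightarrow> pair u (tail n v) = 0"
  by (simp add: pair_Fn_left tail_def)

lemma pair_span_eq_0:
  assumes "\<And>s. s \<in> X \<Longrightarrow> pair z s = 0" "s \<in> fs.span X"
  shows "pair (z :: nat \<Rightarrow> 'k::field) s = 0"
proof -
  have "fs.subspace {s. pair z s = 0}"
    unfolding fs.subspace_def by (auto simp: pair_add_right pair_scale_right)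
  then have "fs.span X \<subseteq> {s. pair z s = 0}"
    using assms(1) by (intro fs.span_minimal) auto
  then show ?thesis using assms(2) by blast
qed

section \<open>Dimension of subspaces of F^n\<close>

lemma finite_basis_Fn:
  fixes S :: "(nat \<Rightarrow> 'k::{field,finite}) set"
  assumes "S \<subseteq> Fn n"
  obtains B where "B \<subseteq> S" "fs.independent B" "S \<subseteq> fs.span B" "card B = fs.dim S" "finite B"
proof -
  obtain B where "B \<subseteq> S" "fs.independent B" "S \<subseteq> fs.span B" "card B = fs.dim S"
    using fs.basis_exists[of S] by blast
  moreover have "finite B" using \<open>B \<subseteq> S\<close> assms by (meson finite_Fn finite_subset order_trans)
  ultimately show ?thesis using that by blast
qed

lemma card_le_dim_Fn:
  fixes B T :: "(nat \<Rightarrow> 'k::{field,finite}) set"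
  assumes "fs.independent B" "B \<subseteq> T" "T \<subseteq> Fn n"
  shows "card B \<le> fs.dim T"
proof -
  obtain C where C: "fs.independent C" "T \<subseteq> fs.span C" "card C = fs.dim T" "finite C"
    using finite_basis_Fn[OF assms(3)] by blast
  have "B \<subseteq> fs.span C" using assms(2) C(2) by blast
  then show ?thesis using fs.independent_span_bound[OF C(4) assms(1)] C(3) by simp
qed

lemma dim_mono_Fn:
  fixes S T :: "(nat \<Rightarrow> 'k::{field,finite}) set"
  assumes "S \<subseteq> T" "T \<subseteq> Fn n"
  shows "fs.dim S \<le> fs.dim T"
proof -
  have "S \<subseteq> Fn n" using assms by blast
  then obtain B where B: "B \<subseteq> S" "fs.independent B" "card B = fs.dim S"
    by (rule finite_basis_Fn)
  have "card B \<le> fs.dim T"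
    by (rule card_le_dim_Fn[OF B(2) _ assms(2)]) (use B(1) assms(1) in blast)
  then show ?thesis using B(3) by simp
qed

lemma subspace_eq_if_dim_le:
  fixes S T :: "(nat \<Rightarrow> 'k::{field,finite}) set"
  assumes "fs.subspace S" "S \<subseteq> T" "T \<subseteq> Fn n" "fs.dim T \<le> fs.dim S"
  shows "S = T"
proof (rule ccontr)
  assume "S \<noteq> T"
  then obtain t where t: "t \<in> T" "t \<notin> S" using assms(2) by blast
  have "S \<subseteq> Fn n" using assms by blast
  then obtain B where B: "B \<subseteq> S" "fs.independent B" "S \<subseteq> fs.span B" "card B = fs.dim S" "finite B"
    by (rule finite_basis_Fn)
  have "t \<notin> fs.span B" using fs.span_subspace[OF B(1,3) assms(1)] t by simp
  then have "fs.independent (insert t B)" using B(2) by (rule fs.independent_insertI)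
  then have "card (insert t B) \<le> fs.dim T"
    by (rule card_le_dim_Fn[OF _ _ assms(3)]) (use B(1) t(1) assms(2) in blast)
  moreover have "t \<notin> B" using t B(1) by blast
  ultimately show False using B(4,5) assms(4) by simp
qed

lemma dim_Fn: "fs.dim (Fn n :: (nat \<Rightarrow> 'k::{field,finite}) set) = n"
proof -
  have inj: "inj_on (ev :: nat \<Rightarrow> nat \<Rightarrow> 'k) {..<n}"
  proof (rule inj_onI)
    fix x y assume "(ev x :: nat \<Rightarrow> 'k) = ev y"
    then have "(ev x x :: 'k) = ev y x" by simp
    then show "x = y" by (simp add: ev_def split: if_splits)
  qed
  have "fs.independent (ev ` {..<n} :: (nat \<Rightarrow> 'k) set)"
  proof (rule fs.independent_if_scalars_zero)
    show "finite (ev ` {..<n} :: (nat \<Rightarrow> 'k) set)" by simp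
    fix f :: "(nat \<Rightarrow> 'k) \<Rightarrow> 'k" and x :: "nat \<Rightarrow> 'k"
    assume sum: "(\<Sum>x\<in>ev ` {..<n}. fscale (f x) x) = 0" and x: "x \<in> ev ` {..<n}"
    then obtain k where k: "k < n" "x = ev k" by blast
    have "0 = (\<Sum>x\<in>ev ` {..<n}. fscale (f x) x) k" using sum by simp
    also have "\<dots> = (\<Sum>j<n. f (ev j) * ev j k)"
      by (simp add: sum_fun_apply sum.reindex[OF inj])
    also have "\<dots> = f (ev k)"
      using k(1) by (simp add: ev_def if_distrib cong: if_cong)
    finally show "f x = 0" using k by simp
  qed
  then have "fs.dim (Fn n :: (nat \<Rightarrow> 'k) set) = card (ev ` {..<n} :: (nat \<Rightarrow> 'k) set)"
    unfolding Fn_def by (rule fs.dim_span_eq_card_independent)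
  also have "\<dots> = n" using card_image[OF inj] by simp
  finally show ?thesis .
qed

section \<open>Relative orthogonal complements\<close>

definition perp_on :: "(nat \<Rightarrow> 'k::field) set \<Rightarrow> (nat \<Rightarrow> 'k) set \<Rightarrow> (nat \<Rightarrow> 'k) set" where
  "perp_on A B = {z \<in> B. \<forall>s\<in>A. pair s z = 0}"

lemma perp_on_subset: "perp_on A B \<subseteq> B"
  by (auto simp: perp_on_def)

lemma subspace_perp_on: "fs.subspace B \<Longrightarrow> fs.subspace (perp_on A B)"
  unfolding fs.subspace_def perp_on_def by (auto simp: pair_add_right pair_scale_right)

lemma perp_on_Un: "perp_on (X \<union> Y) Z = perp_on X Z \<inter> perp_on Y Z"
  by (auto simp: perp_on_def)

lemma perp_on_span:
  fixes X Z :: "(nat \<Rightarrow> 'k::field) set"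
  assumes "X \<subseteq> Finf" "Z \<subseteq> Finf"
  shows "perp_on (fs.span X) Z = perp_on X Z"
proof
  show "perp_on (fs.span X) Z \<subseteq> perp_on X Z"
    using fs.span_superset[of X] unfolding perp_on_def by blast
  have spanF: "fs.span X \<subseteq> Finf"
    using fs.span_minimal[OF assms(1) subspace_Finf] .
  show "perp_on X Z \<subseteq> perp_on (fs.span X) Z"
  proof
    fix z assume z: "z \<in> perp_on X Z"
    then have zZ: "z \<in> Z" and zX: "\<forall>s\<in>X. pair s z = 0" by (auto simp: perp_on_def)
    have zF: "z \<in> Finf" using zZ assms(2) by blast
    have "pair z s = 0" if "s \<in> X" for s using zX that pair_commute[of z s] zF assms(1) by auto
    then have "pair z s = 0" if "s \<in> fs.span X" for s using pair_span_eq_0 that by blast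
    then have "pair s z = 0" if "s \<in> fs.span X" for s
      using that pair_commute[of z s] zF spanF by auto
    then show "z \<in> perp_on (fs.span X) Z" using zZ by (auto simp: perp_on_def)
  qed
qed

lemma subspace_hyperplane:
  fixes A :: "(nat \<Rightarrow> 'k::field) set"
  assumes "fs.subspace A" "A \<subseteq> Finf" "v \<in> Finf"
  shows "fs.subspace {u\<in>A. pair u v = 0}"
  unfolding fs.subspace_def
proof (intro conjI ballI allI)
  show "0 \<in> {u\<in>A. pair u v = 0}" using fs.subspace_0[OF assms(1)] by (simp add: pair_def)
next
  fix x y assume "x \<in> {u\<in>A. pair u v = 0}" "y \<in> {u\<in>A. pair u v = 0}"
  then show "x + y \<in> {u\<in>A. pair u v = 0}"
    using fs.subspace_add[OF assms(1)] pair_add_left[of x y v] assms(2,3) by auto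
next
  fix c x assume "x \<in> {u\<in>A. pair u v = 0}"
  then show "fscale c x \<in> {u\<in>A. pair u v = 0}"
    using fs.subspace_scale[OF assms(1)] pair_scale_left[of x v c] assms(2,3) by auto
qed

lemma dim_eq_Suc_hyperplane:
  fixes A :: "(nat \<Rightarrow> 'k::{field,finite}) set"
  assumes A: "fs.subspace A" "A \<subseteq> Fn n" and w: "w \<in> A" and v: "v \<in> Fn n" and wv: "pair w v = 1"
  shows "fs.dim A = Suc (fs.dim {u\<in>A. pair u v = 0})"
proof -
  let ?A1 = "{u\<in>A. pair u v = 0}"
  have AF: "A \<subseteq> Finf" and vF: "v \<in> Finf" using A(2) v Fn_subset_Finf by blast+
  obtain C where C: "C \<subseteq> ?A1" "fs.independent C" "?A1 \<subseteq> fs.span C" "card C = fs.dim ?A1" "finite C"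
    using finite_basis_Fn[of ?A1 n] A(2) by blast
  have spC: "fs.span C = ?A1"
    by (rule fs.span_subspace[OF C(1,3) subspace_hyperplane[OF A(1) AF vF]])
  have wC: "w \<notin> fs.span C" using spC wv by simp
  have "card (insert w C) = fs.dim A"
  proof (rule fs.basis_card_eq_dim)
    show "insert w C \<subseteq> A" using C(1) w by blast
    show "fs.independent (insert w C)" using wC C(2) by (rule fs.independent_insertI)
    show "A \<subseteq> fs.span (insert w C)"
    proof
      fix u assume u: "u \<in> A"
      let ?c = "pair u v"
      have cw: "fscale ?c w \<in> A" using A(1) w by (rule fs.subspace_scale)
      have "u - fscale ?c w \<in> A" using A(1) u cw by (rule fs.subspace_diff)
      moreover have "u \<in> Finf" "w \<in> Finf" "fscale ?c w \<in> Finf" using u w cw AF by blast+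
      then have "pair (u - fscale ?c w) v = 0"
        using pair_diff_left[of u "fscale ?c w" v] pair_scale_left[of w v ?c] vF wv by simp
      ultimately have "u - fscale ?c w \<in> ?A1" by blast
      then have "u - fscale ?c w \<in> fs.span (insert w C)"
        using spC fs.span_mono[of C "insert w C"] by blast
      moreover have "fscale ?c w \<in> fs.span (insert w C)"
        by (intro fs.span_scale fs.span_base) simp
      ultimately have "(u - fscale ?c w) + fscale ?c w \<in> fs.span (insert w C)"
        by (rule fs.span_add)
      then show "u \<in> fs.span (insert w C)" by simp
    qed
  qed
  moreover have "w \<notin> C" using wC fs.span_base by blast
  ultimately show ?thesis using C(4,5) by simp
qed

lemma perp_on_hyperplanes:
  fixes A B :: "(nat \<Rightarrow> 'k::field) set"
  assumes A: "fs.subspace A" "A \<subseteq> Finf" and B: "B \<subseteq> Finf"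
    and w: "w \<in> A" and v: "v \<in> B" and wv: "pair w v = 1"
  shows "perp_on A B = perp_on {u\<in>A. pair u v = 0} {y\<in>B. pair y w = 0}"
proof
  have wF: "w \<in> Finf" and vF: "v \<in> Finf" using w v A B by blast+
  show "perp_on A B \<subseteq> perp_on {u\<in>A. pair u v = 0} {y\<in>B. pair y w = 0}"
  proof
    fix z assume z: "z \<in> perp_on A B"
    then have "z \<in> B" "pair w z = 0" using w by (auto simp: perp_on_def)
    moreover have "pair z w = pair w z" using \<open>z \<in> B\<close> B wF pair_commute by blast
    ultimately show "z \<in> perp_on {u\<in>A. pair u v = 0} {y\<in>B. pair y w = 0}"
      using z by (auto simp: perp_on_def)
  qed
  show "perp_on {u\<in>A. pair u v = 0} {y\<in>B. pair y w = 0} \<subseteq> perp_on A B"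
  proof
    fix z assume z: "z \<in> perp_on {u\<in>A. pair u v = 0} {y\<in>B. pair y w = 0}"
    then have zB: "z \<in> B" and zw: "pair z w = 0" and zA1: "\<forall>s\<in>A. pair s v = 0 \<longrightarrow> pair s z = 0"
      by (auto simp: perp_on_def)
    have zF: "z \<in> Finf" using zB B by blast
    have "pair s z = 0" if s: "s \<in> A" for s
    proof -
      let ?c = "pair s v"
      have sF: "s \<in> Finf" using s A by blast
      have cwA: "fscale ?c w \<in> A" using A(1) w by (rule fs.subspace_scale)
      have cwF: "fscale ?c w \<in> Finf" using cwA A by blast
      have "pair (s - fscale ?c w) v = 0"
        using pair_diff_left[OF sF cwF vF] pair_scale_left[OF wF vF] wv by simp
      then have "pair (s - fscale ?c w) z = 0"
        using zA1 fs.subspace_diff[OF A(1) s cwA] by blast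
      moreover have "pair w z = 0" using zw pair_commute[OF zF wF] by simp
      ultimately show ?thesis
        using pair_diff_left[OF sF cwF zF] pair_scale_left[OF wF zF] by simp
    qed
    then show "z \<in> perp_on A B" using zB by (auto simp: perp_on_def)
  qed
qed

text \<open>Row rank equals column rank for the pairing on \<open>A \<times> B\<close>. Induction on \<open>dim A + dim B\<close>:
  splitting off \<open>w \<in> A\<close>, \<open>v \<in> B\<close> with \<open>\<langle>w, v\<rangle> = 1\<close> lowers both dimensions by one and
  leaves both complements unchanged.\<close>

lemma dim_perp_on_swap:
  fixes A B :: "(nat \<Rightarrow> 'k::{field,finite}) set"
  assumes "fs.subspace A" "A \<subseteq> Fn n" "fs.subspace B" "B \<subseteq> Fn n"
  shows "fs.dim A + fs.dim (perp_on A B) = fs.dim B + fs.dim (perp_on B A)"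
  using assms
proof (induction "fs.dim A + fs.dim B" arbitrary: A B rule: less_induct)
  case less
  have AF: "A \<subseteq> Finf" and BF: "B \<subseteq> Finf" using less.prems Fn_subset_Finf by blast+
  show ?case
  proof (cases "\<exists>w\<in>A. \<exists>v\<in>B. pair w v \<noteq> 0")
    case False
    have "perp_on A B = B" using False by (auto simp: perp_on_def)
    moreover have "pair s z = 0" if "z \<in> A" "s \<in> B" for s z
      using False that pair_commute[of s z] AF BF by auto
    then have "perp_on B A = A" by (auto simp: perp_on_def)
    ultimately show ?thesis by simp
  next
    case True
    then obtain w0 v where w0: "w0 \<in> A" and v: "v \<in> B" and ne: "pair w0 v \<noteq> 0" by blast
    define w where "w = fscale (inverse (pair w0 v)) w0"
    have w: "w \<in> A" unfolding w_def using less.prems(1) w0 by (rule fs.subspace_scale)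
    have "w0 \<in> Finf" "v \<in> Finf" using w0 v AF BF by blast+
    then have "pair w v = inverse (pair w0 v) * pair w0 v" unfolding w_def by (rule pair_scale_left)
    then have wv: "pair w v = 1" using ne by simp
    have vw: "pair v w = 1" using wv pair_commute w v AF BF by (metis subsetD)
    let ?A1 = "{u\<in>A. pair u v = 0}" and ?B1 = "{y\<in>B. pair y w = 0}"
    have dA: "fs.dim A = Suc (fs.dim ?A1)"
      by (rule dim_eq_Suc_hyperplane[OF less.prems(1,2) w _ wv]) (use v less.prems(4) in blast)
    have dB: "fs.dim B = Suc (fs.dim ?B1)"
      by (rule dim_eq_Suc_hyperplane[OF less.prems(3,4) v _ vw]) (use w less.prems(2) in blast)
    have "fs.subspace ?A1" "fs.subspace ?B1"
      using subspace_hyperplane less.prems(1,3) AF BF v w by blast+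
    then have "fs.dim ?A1 + fs.dim (perp_on ?A1 ?B1) = fs.dim ?B1 + fs.dim (perp_on ?B1 ?A1)"
      by (intro less.hyps) (use dA dB less.prems in auto)
    moreover have "perp_on A B = perp_on ?A1 ?B1" "perp_on B A = perp_on ?B1 ?A1"
      by (rule perp_on_hyperplanes; use less.prems AF BF w v wv vw in blast)+
    ultimately show ?thesis using dA dB by simp
  qed
qed

lemma dim_perp_on_Fn:
  fixes S :: "(nat \<Rightarrow> 'k::{field,finite}) set"
  assumes "fs.subspace S" "S \<subseteq> Fn n"
  shows "fs.dim S + fs.dim (perp_on S (Fn n)) = n"
proof -
  have "perp_on (Fn n) S = {0}"
  proof
    show "{0} \<subseteq> perp_on (Fn n) S" using fs.subspace_0[OF assms(1)] by (auto simp: perp_on_def)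
    show "perp_on (Fn n) S \<subseteq> {0}"
    proof
      fix z assume z: "z \<in> perp_on (Fn n) S"
      have "z i = 0" for i
        using z assms(2) ev_in_Fn[of i n] by (cases "i < n") (auto simp: perp_on_def Fn_char)
      then show "z \<in> {0}" by auto
    qed
  qed
  then have "fs.dim (perp_on (Fn n) S) = 0"
    using fs.dim_le_card[of "{0 :: nat \<Rightarrow> 'k}" "{}"] by simp
  then show ?thesis
    using dim_perp_on_swap[OF assms subspace_Fn order_refl] dim_Fn[where 'k='k] by simp
qed

lemma perp_on_perp_on_Fn:
  fixes S :: "(nat \<Rightarrow> 'k::{field,finite}) set"
  assumes "fs.subspace S" "S \<subseteq> Fn n"
  shows "perp_on (perp_on S (Fn n)) (Fn n) = S"
proof -
  let ?P = "perp_on S (Fn n)"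
  have sP: "fs.subspace ?P" by (rule subspace_perp_on[OF subspace_Fn])
  have PF: "?P \<subseteq> Fn n" by (rule perp_on_subset)
  have "S \<subseteq> perp_on ?P (Fn n)"
  proof
    fix s assume s: "s \<in> S"
    have "pair p s = 0" if "p \<in> ?P" for p
    proof -
      have "pair s p = 0" using that s by (auto simp: perp_on_def)
      moreover have "p \<in> Finf" "s \<in> Finf" using that s PF assms(2) Fn_subset_Finf by blast+
      ultimately show ?thesis using pair_commute by metis
    qed
    then show "s \<in> perp_on ?P (Fn n)" using s assms(2) by (auto simp: perp_on_def)
  qed
  moreover have "fs.dim (perp_on ?P (Fn n)) \<le> fs.dim S"
    using dim_perp_on_Fn[OF assms] dim_perp_on_Fn[OF sP PF] by simp
  ultimately show ?thesis
    using subspace_eq_if_dim_le[OF assms(1) _ perp_on_subset] by blast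
qed

section \<open>Dual bases\<close>

text \<open>The matrices with rows \<open>r i\<close> and with columns \<open>f j\<close> are mutually inverse.\<close>

definition dual_bases :: "nat \<Rightarrow> (nat \<Rightarrow> nat \<Rightarrow> 'k::field) \<Rightarrow> (nat \<Rightarrow> nat \<Rightarrow> 'k) \<Rightarrow> bool" where
  "dual_bases n r f \<longleftrightarrow> (\<forall>i<n. r i \<in> Fn n \<and> f i \<in> Fn n) \<and>
     (\<forall>i<n. \<forall>j<n. pair (r i) (f j) = idm i j \<and> (\<Sum>k<n. f k i * r k j) = idm i j)"

lemma pair_representation:
  fixes B :: "(nat \<Rightarrow> 'k::field) set"
  assumes ind: "fs.independent B" and span: "Fn n \<subseteq> fs.span B" and z: "z \<in> Fn n"
  shows "pair (\<lambda>k. if k < n then fs.representation B (ev k) b else 0) z = fs.representation B z b"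
proof -
  have evB: "ev k \<in> fs.span B" if "k < n" for k
    using span ev_in_Fn[OF that] by blast
  have "(\<lambda>k. if k < n then fs.representation B (ev k) b else 0) \<in> Fn n" by (simp add: Fn_char)
  then have "pair (\<lambda>k. if k < n then fs.representation B (ev k) b else 0) z
      = (\<Sum>k<n. (if k < n then fs.representation B (ev k) b else 0) * z k)"
    by (rule pair_Fn_left)
  also have "\<dots> = (\<Sum>k<n. z k * fs.representation B (ev k) b)"
    by (simp add: mult.commute)
  also have "\<dots> = fs.representation B (\<Sum>k<n. fscale (z k) (ev k)) b"
  proof -
    have "fs.representation B (\<Sum>k<n. fscale (z k) (ev k))
        = (\<lambda>b. \<Sum>k<n. fs.representation B (fscale (z k) (ev k)) b)"
      by (rule fs.representation_sum[OF ind]) (simp add: evB fs.span_scale)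
    also have "\<dots> = (\<lambda>b. \<Sum>k<n. z k * fs.representation B (ev k) b)"
      by (intro ext sum.cong refl) (simp add: fs.representation_scale[OF ind] evB)
    finally show ?thesis by simp
  qed
  also have "\<dots> = fs.representation B z b" using Fn_eq_sum_ev[OF z] by simp
  finally show ?thesis .
qed

lemma dual_bases_exist:
  fixes f :: "nat \<Rightarrow> nat \<Rightarrow> 'k::{field,finite}"
  assumes inj: "inj_on f {..<n}" and sub: "f ` {..<n} \<subseteq> Fn n"
    and ind: "fs.independent (f ` {..<n})" and span: "Fn n \<subseteq> fs.span (f ` {..<n})"
  obtains r where "dual_bases n r f"
proof -
  let ?B = "f ` {..<n}"
  define r where "r i = (\<lambda>k. if k < n then fs.representation ?B (ev k) (f i) else 0)" for i
  have rF: "r i \<in> Fn n" for i unfolding r_def by (simp add: Fn_char)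
  have "pair (r i) (f j) = idm i j" if "i < n" "j < n" for i j
  proof -
    have "pair (r i) (f j) = fs.representation ?B (f j) (f i)"
      unfolding r_def by (rule pair_representation[OF ind span]) (use sub that in blast)
    also have "\<dots> = (if f i = f j then 1 else 0)"
      using fs.representation_basis[OF ind, of "f j"] that by simp
    also have "\<dots> = idm i j" using inj that by (auto simp: idm_def inj_on_def)
    finally show ?thesis .
  qed
  moreover have "(\<Sum>k<n. f k m * r k j) = idm m j" if "m < n" "j < n" for m j
  proof -
    have "ev j \<in> fs.span ?B" using span ev_in_Fn[OF that(2)] by blast
    then have "ev j = (\<Sum>b\<in>?B. fscale (fs.representation ?B (ev j) b) b)"
      by (rule fs.sum_representation_eq[OF ind _ _ order_refl, symmetric]) simp
    also have "\<dots> = (\<Sum>k<n. fscale (fs.representation ?B (ev j) (f k)) (f k))"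
      by (rule sum.reindex_cong[OF inj refl]) simp
    also have "\<dots> = (\<Sum>k<n. fscale (r k j) (f k))"
      using that(2) by (simp add: r_def)
    finally have "ev j m = (\<Sum>k<n. fscale (r k j) (f k)) m" by simp
    then show ?thesis by (simp add: sum_fun_apply ev_def idm_def mult.commute)
  qed
  ultimately have "dual_bases n r f"
    using rF sub by (auto simp: dual_bases_def)
  then show ?thesis by (rule that)
qed

lemma dual_bases_expansion:
  assumes "dual_bases n r f" "u \<in> Fn n"
  shows "u = (\<Sum>i<n. fscale (pair u (f i)) (r i))"
proof
  fix m
  show "u m = (\<Sum>i<n. fscale (pair u (f i)) (r i)) m"
  proof (cases "m < n")
    case True
    have "(\<Sum>i<n. fscale (pair u (f i)) (r i)) m = (\<Sum>i<n. \<Sum>k<n. u k * (f i k * r i m))"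
      by (simp add: sum_fun_apply pair_Fn_left[OF assms(2)] sum_distrib_right mult.assoc)
    also have "\<dots> = (\<Sum>k<n. u k * (\<Sum>i<n. f i k * r i m))"
      by (subst sum.swap) (simp add: sum_distrib_left)
    also have "\<dots> = (\<Sum>k<n. u k * idm k m)"
      using assms(1) True by (simp add: dual_bases_def)
    also have "\<dots> = u m" using True by (simp add: idm_def if_distrib cong: if_cong)
    finally show ?thesis by simp
  next
    case False
    then show ?thesis
      using assms by (simp add: sum_fun_apply Fn_char dual_bases_def)
  qed
qed

lemma subspace_eq_span_dual_basis:
  fixes S :: "(nat \<Rightarrow> 'k::{field,finite}) set"
  assumes dual: "dual_bases n r f" and S: "fs.subspace S" "S \<subseteq> Fn n"
    and I: "I \<subseteq> {..<n}" "card I \<le> fs.dim S"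
    and orth: "\<And>u i. u \<in> S \<Longrightarrow> i < n \<Longrightarrow> i \<notin> I \<Longrightarrow> pair u (f i) = 0"
  shows "S = fs.span (r ` I)"
proof (rule subspace_eq_if_dim_le[OF S(1)])
  show "fs.span (r ` I) \<subseteq> Fn n"
    using dual I(1) by (intro fs.span_minimal[OF _ subspace_Fn]) (auto simp: dual_bases_def)
  show "S \<subseteq> fs.span (r ` I)"
  proof
    fix u assume u: "u \<in> S"
    have "(\<Sum>i<n. fscale (pair u (f i)) (r i)) \<in> fs.span (r ` I)"
    proof (rule fs.span_sum)
      fix i assume i: "i \<in> {..<n}"
      show "fscale (pair u (f i)) (r i) \<in> fs.span (r ` I)"
      proof (cases "i \<in> I")
        case True
        then show ?thesis by (intro fs.span_scale fs.span_base) auto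
      next
        case False
        then have "pair u (f i) = 0" using orth[OF u] i by simp
        then show ?thesis using fs.span_zero by (simp add: fscale_def zero_fun_def)
      qed
    qed
    then show "u \<in> fs.span (r ` I)"
      using dual_bases_expansion[OF dual] u S(2) by auto
  qed
  have "fs.dim (fs.span (r ` I)) \<le> card (r ` I)"
    using I(1) finite_subset by (intro fs.dim_le_card) auto
  also have "\<dots> \<le> card I" using I(1) finite_subset by (intro card_image_le) auto
  finally show "fs.dim (fs.span (r ` I)) \<le> fs.dim S" using I(2) by simp
qed

section \<open>A basis adapted to the pairing\<close>

lemma image_nth_append_suffix: "(!) (xs @ ys) ` {length xs..<length xs + length ys} = set ys"
proof
  show "(!) (xs @ ys) ` {length xs..<length xs + length ys} \<subseteq> set ys"
    by (auto simp: nth_append intro!: nth_mem)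
  show "set ys \<subseteq> (!) (xs @ ys) ` {length xs..<length xs + length ys}"
  proof
    fix y assume "y \<in> set ys"
    then obtain i where "i < length ys" "y = ys ! i" by (auto simp: in_set_conv_nth)
    then show "y \<in> (!) (xs @ ys) ` {length xs..<length xs + length ys}"
      by (intro image_eqI[of _ _ "length xs + i"]) (auto simp: nth_append)
  qed
qed

lemma enumeration_nested:
  assumes "finite D" "A \<subseteq> B" "B \<subseteq> C" "C \<subseteq> D"
  obtains f where "inj_on f {..<card D}" "f ` {..<card D} = D"
    "f ` {card D - card A..<card D} = A" "f ` {card D - card B..<card D} = B"
    "f ` {card D - card C..<card D} = C"
proof -
  have fin: "finite C" "finite B" "finite A"
    using assms by (meson finite_subset)+
  obtain LA where LA: "distinct LA" "set LA = A" using finite_distinct_list[OF fin(3)] by blast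
  obtain LB where LB: "distinct LB" "set LB = B - A" using finite_distinct_list[of "B - A"] fin by blast
  obtain LC where LC: "distinct LC" "set LC = C - B" using finite_distinct_list[of "C - B"] fin by blast
  obtain LD where LD: "distinct LD" "set LD = D - C" using finite_distinct_list[of "D - C"] assms(1) by blast
  have len: "length LA = card A" "length LB = card B - card A"
    "length LC = card C - card B" "length LD = card D - card C"
    using LA LB LC LD distinct_card card_Diff_subset assms fin by metis+
  have le: "card A \<le> card B" "card B \<le> card C" "card C \<le> card D"
    using assms fin by (simp_all add: card_mono)
  define L where "L = LD @ LC @ LB @ LA"
  have L: "distinct L" "set L = D" "length L = card D"
    using LA LB LC LD len le assms unfolding L_def by auto
  show ?thesis
  proof (rule that[of "(!) L"])
    show "inj_on ((!) L) {..<card D}" using L by (simp add: inj_on_nth)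
    show "(!) L ` {..<card D} = D"
      using image_nth_append_suffix[of "[]" L] L by (simp add: atLeast0LessThan)
    show "(!) L ` {card D - card A..<card D} = A"
      using image_nth_append_suffix[of "LD @ LC @ LB" LA] len le LA unfolding L_def by simp
    show "(!) L ` {card D - card B..<card D} = B"
      using image_nth_append_suffix[of "LD @ LC" "LB @ LA"] len le LA LB assms unfolding L_def by auto
    show "(!) L ` {card D - card C..<card D} = C"
      using image_nth_append_suffix[of LD "LC @ LB @ LA"] len le LA LB LC assms unfolding L_def by auto
  qed
qed

text \<open>\<open>(V0 + W0\<^sup>\<perp>)\<^sup>\<perp> = W0 \<inter> V0\<^sup>\<perp>\<close>.\<close>

lemma dim_span_Un_perp_on_Fn:
  fixes W0 V0 :: "(nat \<Rightarrow> 'k::{field,finite}) set"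
  assumes W0: "fs.subspace W0" "W0 \<subseteq> Fn n" and V0: "V0 \<subseteq> Fn n"
  shows "fs.dim (fs.span (V0 \<union> perp_on W0 (Fn n))) + fs.dim (perp_on V0 W0) = n"
proof -
  let ?P = "perp_on W0 (Fn n)" and ?U = "fs.span (V0 \<union> perp_on W0 (Fn n))"
  have PF: "?P \<subseteq> Fn n" by (rule perp_on_subset)
  have UF: "?U \<subseteq> Fn n" using V0 PF by (intro fs.span_minimal[OF _ subspace_Fn]) blast
  have "perp_on ?U (Fn n) = perp_on V0 (Fn n) \<inter> perp_on ?P (Fn n)"
    using perp_on_span[of "V0 \<union> ?P" "Fn n"] perp_on_Un V0 PF Fn_subset_Finf by blast
  also have "\<dots> = perp_on V0 W0"
    using perp_on_perp_on_Fn[OF W0] W0(2) by (auto simp: perp_on_def)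
  finally show ?thesis using dim_perp_on_Fn[OF fs.subspace_span UF] by simp
qed

text \<open>Bases \<open>Y \<subseteq> BV \<subseteq> BU \<subseteq> BF\<close> of \<open>V0 \<inter> W0\<^sup>\<perp>\<close>, \<open>V0\<close>, \<open>V0 + W0\<^sup>\<perp>\<close> and \<open>F\<^sup>n\<close>.\<close>

lemma adapted_basis_chain:
  fixes W0 V0 :: "(nat \<Rightarrow> 'k::{field,finite}) set"
  assumes W0: "fs.subspace W0" "W0 \<subseteq> Fn n" and V0: "fs.subspace V0" "V0 \<subseteq> Fn n"
    and a: "a = fs.dim (perp_on V0 W0)" and b: "b = fs.dim (perp_on W0 V0)" and c: "c = fs.dim V0 - b"
  obtains Y BV BU BF where "Y \<subseteq> BV" "BV \<subseteq> BU" "BU \<subseteq> BF"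
    "Y \<subseteq> perp_on W0 (Fn n)" "BU \<subseteq> BV \<union> perp_on W0 (Fn n)" "V0 = fs.span BV"
    "BF \<subseteq> Fn n" "fs.independent BF" "Fn n \<subseteq> fs.span BF" "finite BF"
    "card (BV - Y) = c" "card BV = b + c" "card BU + a = n" "card BF = n"
proof -
  let ?P = "perp_on W0 (Fn n)"
  have rad: "perp_on W0 V0 = V0 \<inter> ?P" using V0(2) by (auto simp: perp_on_def)
  have "b \<le> fs.dim V0" unfolding b by (rule dim_mono_Fn[OF perp_on_subset V0(2)])
  then have dV: "fs.dim V0 = b + c" unfolding c by simp
  have "perp_on W0 V0 \<subseteq> Fn n" using V0(2) perp_on_subset by blast
  then obtain Y where Y: "Y \<subseteq> perp_on W0 V0" "fs.independent Y" "card Y = b" "finite Y"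
    unfolding b by (rule finite_basis_Fn)
  obtain BV where BV: "Y \<subseteq> BV" "BV \<subseteq> V0" "fs.independent BV" "V0 \<subseteq> fs.span BV"
    using fs.maximal_independent_subset_extend[of Y V0] Y(1,2) rad by blast
  have cBV: "card BV = b + c" using fs.basis_card_eq_dim[OF BV(2,4,3)] dV by simp
  obtain BU where BU: "BV \<subseteq> BU" "BU \<subseteq> BV \<union> ?P" "fs.independent BU" "BV \<union> ?P \<subseteq> fs.span BU"
    using fs.maximal_independent_subset_extend[of BV "BV \<union> ?P"] BV(3) by blast
  have "card BU = fs.dim (fs.span (V0 \<union> ?P))"
  proof (rule fs.basis_card_eq_dim[OF _ _ BU(3)])
    show "BU \<subseteq> fs.span (V0 \<union> ?P)" using BU(2) BV(2) fs.span_superset[of "V0 \<union> ?P"] by blast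
    have "V0 \<union> ?P \<subseteq> fs.span BU" using BV(4) fs.span_mono[OF BU(1)] BU(4) by blast
    then show "fs.span (V0 \<union> ?P) \<subseteq> fs.span BU" by (intro fs.span_minimal) auto
  qed
  then have cBU: "card BU + a = n" using dim_span_Un_perp_on_Fn[OF W0 V0(2)] unfolding a by simp
  have "BU \<subseteq> Fn n" using BU(2) BV(2) V0(2) perp_on_subset by blast
  then obtain BF where BF: "BU \<subseteq> BF" "BF \<subseteq> Fn n" "fs.independent BF" "Fn n \<subseteq> fs.span BF"
    using fs.maximal_independent_subset_extend[OF _ BU(3)] by blast
  have "card BF = n" using fs.basis_card_eq_dim[OF BF(2,4,3)] dim_Fn by metis
  moreover have "finite BF" using BF(2) by (meson finite_Fn finite_subset)
  moreover have "card (BV - Y) = c" using card_Diff_subset[OF Y(4) BV(1)] cBV Y(3) by simp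
  moreover have "V0 = fs.span BV" using fs.span_subspace[OF BV(2,4) V0(1)] by simp
  moreover have "Y \<subseteq> ?P" using Y(1) rad by blast
  ultimately show ?thesis using that BV(1) BU(1,2) BF cBV cBU by blast
qed

lemma adapted_ordered_basis:
  fixes W0 V0 :: "(nat \<Rightarrow> 'k::{field,finite}) set"
  assumes W0: "fs.subspace W0" "W0 \<subseteq> Fn n" and V0: "fs.subspace V0" "V0 \<subseteq> Fn n"
    and a: "a = fs.dim (perp_on V0 W0)" and b: "b = fs.dim (perp_on W0 V0)" and c: "c = fs.dim V0 - b"
  obtains f where "inj_on f {..<n}" "f ` {..<n} \<subseteq> Fn n" "fs.independent (f ` {..<n})"
    "Fn n \<subseteq> fs.span (f ` {..<n})" "\<And>i. a \<le> i \<Longrightarrow> i < n - c \<Longrightarrow> f i \<in> perp_on W0 (Fn n)"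
    "V0 = fs.span (f ` {n - b - c..<n})" "a + b + c \<le> n"
proof -
  obtain Y BV BU BF where B: "Y \<subseteq> BV" "BV \<subseteq> BU" "BU \<subseteq> BF"
    "Y \<subseteq> perp_on W0 (Fn n)" "BU \<subseteq> BV \<union> perp_on W0 (Fn n)" "V0 = fs.span BV"
    "BF \<subseteq> Fn n" "fs.independent BF" "Fn n \<subseteq> fs.span BF" "finite BF"
    and card: "card (BV - Y) = c" "card BV = b + c" "card BU + a = n" "card BF = n"
    by (rule adapted_basis_chain[OF assms])
  have abc: "a + b + c \<le> n"
    using card_mono[OF finite_subset[OF B(3,10)] B(2)] card by simp
  obtain f where f: "inj_on f {..<card BF}" "f ` {..<card BF} = BF"
    "f ` {card BF - card (BV - Y)..<card BF} = BV - Y" "f ` {card BF - card BV..<card BF} = BV"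
    "f ` {card BF - card BU..<card BF} = BU"
    by (rule enumeration_nested[OF B(10) Diff_subset B(2,3)])
  have "n - card BU = a" using card by simp
  then have f': "f ` {n - c..<n} = BV - Y" "f ` {n - b - c..<n} = BV" "f ` {a..<n} = BU"
    using f(3-5) card by (simp_all add: diff_diff_left)
  show ?thesis
  proof (rule that)
    show "inj_on f {..<n}" using f(1) card by simp
    show "f ` {..<n} \<subseteq> Fn n" "fs.independent (f ` {..<n})" "Fn n \<subseteq> fs.span (f ` {..<n})"
      using f(2) card B(7-9) by auto
    show "V0 = fs.span (f ` {n - b - c..<n})" using f'(2) B(6) by simp
    show "a + b + c \<le> n" by (rule abc)
    fix i assume i: "a \<le> i" "i < n - c"
    have "f i \<in> BU" using f'(3) i by auto
    moreover have "f i \<notin> BV - Y"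
    proof
      assume "f i \<in> BV - Y"
      then obtain j where j: "j \<in> {n - c..<n}" "f i = f j" using f'(1) by (metis imageE)
      then have "i = j" using inj_onD[OF f(1)] card i by auto
      then show False using i j(1) by simp
    qed
    ultimately show "f i \<in> perp_on W0 (Fn n)" using B(4,5) by blast
  qed
qed

lemma adapted_dual_bases:
  fixes W0 V0 :: "(nat \<Rightarrow> 'k::{field,finite}) set"
  assumes W0: "fs.subspace W0" "W0 \<subseteq> Fn n" and V0: "fs.subspace V0" "V0 \<subseteq> Fn n"
    and a: "a = fs.dim (perp_on V0 W0)" and b: "b = fs.dim (perp_on W0 V0)" and c: "c = fs.dim V0 - b"
  obtains r f where "dual_bases n r f" "V0 = fs.span (f ` {n - b - c..<n})"
    "W0 = fs.span (r ` ({..<a} \<union> {n - c..<n}))" "a + b + c \<le> n"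
proof -
  obtain f where f: "inj_on f {..<n}" "f ` {..<n} \<subseteq> Fn n" "fs.independent (f ` {..<n})"
    "Fn n \<subseteq> fs.span (f ` {..<n})" "\<And>i. a \<le> i \<Longrightarrow> i < n - c \<Longrightarrow> f i \<in> perp_on W0 (Fn n)"
    "V0 = fs.span (f ` {n - b - c..<n})" and abc: "a + b + c \<le> n"
    using adapted_ordered_basis[OF W0 V0 a b c] by blast
  obtain r where r: "dual_bases n r f" using dual_bases_exist[OF f(1-4)] by blast
  have "b \<le> fs.dim V0" unfolding b by (rule dim_mono_Fn[OF perp_on_subset V0(2)])
  moreover have "fs.dim W0 + b = fs.dim V0 + a"
    using dim_perp_on_swap[OF W0 V0] unfolding a b by simp
  ultimately have dW: "fs.dim W0 = a + c" unfolding c by simp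
  have "W0 = fs.span (r ` ({..<a} \<union> {n - c..<n}))"
  proof (rule subspace_eq_span_dual_basis[OF r W0])
    show "{..<a} \<union> {n - c..<n} \<subseteq> {..<n}" using abc by auto
    have "card ({..<a} \<union> {n - c..<n}) = a + c" using abc by (subst card_Un_disjoint) auto
    then show "card ({..<a} \<union> {n - c..<n}) \<le> fs.dim W0" using dW by simp
    fix u i assume "u \<in> W0" "i < n" "i \<notin> {..<a} \<union> {n - c..<n}"
    then show "pair u (f i) = 0" using f(5)[of i] by (auto simp: perp_on_def)
  qed
  then show ?thesis using that r f(6) abc by blast
qed

section \<open>Matrices in \<open>GL\<^sub>n\<close>\<close>

definition pad_id :: "nat \<Rightarrow> (nat \<Rightarrow> nat \<Rightarrow> 'k::field) \<Rightarrow> nat \<Rightarrow> nat \<Rightarrow> 'k" where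
  "pad_id n A = (\<lambda>i j. if i < n \<and> j < n then A i j else idm i j)"

definition padded :: "nat \<Rightarrow> (nat \<Rightarrow> nat \<Rightarrow> 'k::field) \<Rightarrow> bool" where
  "padded n M \<longleftrightarrow> pad_id n M = M"

lemma mmult_eq_sum:
  "finite S \<Longrightarrow> {k. g i k \<noteq> 0} \<subseteq> S \<Longrightarrow> mmult g h i j = (\<Sum>k\<in>S. g i k * h k j)"
  unfolding mmult_def by (rule sum.mono_neutral_left) auto

lemma mvec_eq_sum: "finite S \<Longrightarrow> {k. v k \<noteq> 0} \<subseteq> S \<Longrightarrow> mvec g v i = (\<Sum>k\<in>S. g i k * v k)"
  unfolding mvec_def by (rule sum.mono_neutral_left) auto

lemma sum_mult_idm_right: "finite S \<Longrightarrow> j \<in> S \<Longrightarrow> (\<Sum>k\<in>S. h k * idm k j) = (h j :: 'k::field)"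
  by (simp add: idm_def if_distrib sum.delta' cong: if_cong)

lemma sum_idm_mult_left: "finite S \<Longrightarrow> i \<in> S \<Longrightarrow> (\<Sum>k\<in>S. idm i k * h k) = (h i :: 'k::field)"
proof -
  assume "finite S" "i \<in> S"
  have "(\<Sum>k\<in>S. idm i k * h k) = (\<Sum>k\<in>S. if i = k then h k else 0)"
    by (rule sum.cong) (auto simp: idm_def)
  then show ?thesis using \<open>finite S\<close> \<open>i \<in> S\<close> by (simp add: sum.delta)
qed

lemma mmult_idm_left: "mmult idm M = M"
proof (intro ext)
  fix i j
  have "mmult idm M i j = (\<Sum>k\<in>{i}. idm i k * M k j)" by (rule mmult_eq_sum) (auto simp: idm_def)
  then show "mmult idm M i j = M i j" by (simp add: idm_def)
qed

lemma mmult_pad_id: "mmult (pad_id n A) (pad_id n B) = pad_id n (\<lambda>i j. \<Sum>k<n. A i k * B k j)"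
proof (intro ext)
  fix i j
  show "mmult (pad_id n A) (pad_id n B) i j = pad_id n (\<lambda>i j. \<Sum>k<n. A i k * B k j) i j"
  proof (cases "i < n")
    case True
    have "mmult (pad_id n A) (pad_id n B) i j = (\<Sum>k<n. pad_id n A i k * pad_id n B k j)"
      by (rule mmult_eq_sum) (use True in \<open>auto simp: pad_id_def idm_def not_less[symmetric]\<close>)
    also have "\<dots> = (\<Sum>k<n. A i k * pad_id n B k j)"
      using True by (intro sum.cong) (auto simp: pad_id_def)
    also have "\<dots> = pad_id n (\<lambda>i j. \<Sum>k<n. A i k * B k j) i j"
      using True by (cases "j < n") (auto simp: pad_id_def idm_def)
    finally show ?thesis .
  next
    case False
    have "mmult (pad_id n A) (pad_id n B) i j = (\<Sum>k\<in>{i}. pad_id n A i k * pad_id n B k j)"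
      by (rule mmult_eq_sum) (use False in \<open>auto simp: pad_id_def idm_def\<close>)
    then show ?thesis using False by (simp add: pad_id_def idm_def)
  qed
qed

lemma mvec_pad_id:
  assumes "v \<in> Finf"
  shows "mvec (pad_id n A) v = (\<lambda>i. if i < n then (\<Sum>k<n. A i k * v k) else v i)"
proof
  fix i
  let ?S = "{k. v k \<noteq> 0} \<union> {..<n} \<union> {i}"
  have fS: "finite ?S" using assms by (simp add: Finf_def)
  have e: "mvec (pad_id n A) v i = (\<Sum>k\<in>?S. pad_id n A i k * v k)"
    by (rule mvec_eq_sum[OF fS]) auto
  show "mvec (pad_id n A) v i = (if i < n then (\<Sum>k<n. A i k * v k) else v i)"
  proof (cases "i < n")
    case True
    have "(\<Sum>k\<in>?S. pad_id n A i k * v k) = (\<Sum>k<n. pad_id n A i k * v k)"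
      by (rule sum.mono_neutral_right[OF fS]) (use True in \<open>auto simp: pad_id_def idm_def\<close>)
    also have "\<dots> = (\<Sum>k<n. A i k * v k)" using True by (intro sum.cong) (auto simp: pad_id_def)
    finally show ?thesis using e True by simp
  next
    case False
    have "(\<Sum>k\<in>?S. pad_id n A i k * v k) = (\<Sum>k\<in>?S. idm i k * v k)"
      using False by (intro sum.cong) (auto simp: pad_id_def)
    also have "\<dots> = v i" by (rule sum_idm_mult_left[OF fS]) simp
    finally show ?thesis using e False by simp
  qed
qed

lemma mtrans_pad_id: "mtrans (pad_id n A) = pad_id n (\<lambda>i j. A j i)"
  by (auto simp: mtrans_def pad_id_def idm_def intro!: ext)

lemma finid_pad_id: "finid (pad_id n A)"
proof -
  have "{(i, j). pad_id n A i j \<noteq> idm i j} \<subseteq> {..<n} \<times> {..<n}" by (auto simp: pad_id_def)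
  then show ?thesis unfolding finid_def by (rule finite_subset) simp
qed

lemma pad_id_idm: "pad_id n idm = (idm :: nat \<Rightarrow> nat \<Rightarrow> 'k::field)"
  by (auto simp: pad_id_def intro!: ext)

lemma pad_id_cong: "(\<And>i j. i < n \<Longrightarrow> j < n \<Longrightarrow> A i j = B i j) \<Longrightarrow> pad_id n A = pad_id n B"
  by (auto simp: pad_id_def intro!: ext)

lemma padded_pad_id: "padded n (pad_id n A)"
  by (auto simp: padded_def pad_id_def intro!: ext)

lemma padded_mmult:
  assumes "padded n M" "padded n N"
  shows "padded n (mmult M N)"
proof -
  have "mmult M N = mmult (pad_id n M) (pad_id n N)" using assms by (simp add: padded_def)
  also have "\<dots> = pad_id n (\<lambda>i j. \<Sum>k<n. M i k * N k j)" by (rule mmult_pad_id)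
  finally show ?thesis by (simp add: padded_pad_id)
qed

lemma sum_mult_sum_swap:
  "(\<Sum>l\<in>T. (\<Sum>k\<in>S. a k * b k l) * c l) = (\<Sum>k\<in>S. a k * (\<Sum>l\<in>T. b k l * c l :: 'k::comm_ring))"
proof -
  have "(\<Sum>l\<in>T. (\<Sum>k\<in>S. a k * b k l) * c l) = (\<Sum>l\<in>T. \<Sum>k\<in>S. a k * (b k l * c l))"
    unfolding sum_distrib_right by (simp only: mult.assoc)
  also have "\<dots> = (\<Sum>k\<in>S. \<Sum>l\<in>T. a k * (b k l * c l))" by (rule sum.swap)
  also have "\<dots> = (\<Sum>k\<in>S. a k * (\<Sum>l\<in>T. b k l * c l))" unfolding sum_distrib_left ..
  finally show ?thesis .
qed

lemma padded_mmult_assoc: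
  assumes "padded n A" "padded n B" "padded n C"
  shows "mmult (mmult A B) C = mmult A (mmult B C)"
proof -
  have "mmult (mmult (pad_id n A) (pad_id n B)) (pad_id n C)
      = mmult (pad_id n A) (mmult (pad_id n B) (pad_id n C))"
    by (simp add: mmult_pad_id sum_mult_sum_swap)
  then show ?thesis using assms by (simp add: padded_def)
qed

lemma padded_eq_idm: "padded n M \<Longrightarrow> n \<le> i \<or> n \<le> j \<Longrightarrow> M i j = idm i j"
  unfolding padded_def by (metis pad_id_def not_le)

lemma finite_row_support:
  assumes "finid h"
  shows "finite {k. h i k \<noteq> 0}"
proof -
  let ?D = "{(i, j). h i j \<noteq> idm i j}"
  have "{k. h i k \<noteq> 0} \<subseteq> snd ` ?D \<union> {i}"
  proof
    fix k assume k: "k \<in> {k. h i k \<noteq> 0}"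
    show "k \<in> snd ` ?D \<union> {i}"
    proof (cases "k = i")
      case False
      then have "(i, k) \<in> ?D" using k by (auto simp: idm_def)
      then show ?thesis by force
    qed simp
  qed
  moreover have "finite (snd ` ?D \<union> {i})" using assms by (simp add: finid_def)
  ultimately show ?thesis by (rule finite_subset)
qed

lemma mmult_assoc_entry:
  assumes S: "finite S" "{k. h i k \<noteq> 0} \<subseteq> S"
    and T: "finite T" "\<And>k. k \<in> S \<Longrightarrow> {l. g k l \<noteq> 0} \<subseteq> T"
  shows "mmult h (mmult g q) i j = mmult (mmult h g) q i j"
proof -
  have hg: "mmult h g i l = (\<Sum>k\<in>S. h i k * g k l)" for l
    by (rule mmult_eq_sum[where g=h and i=i, OF S])
  have "mmult h (mmult g q) i j = (\<Sum>k\<in>S. h i k * mmult g q k j)"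
    by (rule mmult_eq_sum[where g=h and i=i, OF S])
  also have "\<dots> = (\<Sum>k\<in>S. h i k * (\<Sum>l\<in>T. g k l * q l j))"
    by (intro sum.cong refl) (simp add: mmult_eq_sum[OF T(1) T(2)])
  also have "\<dots> = (\<Sum>l\<in>T. mmult h g i l * q l j)"
    unfolding hg by (rule sum_mult_sum_swap[symmetric])
  also have "\<dots> = mmult (mmult h g) q i j"
  proof (rule mmult_eq_sum[OF T(1), symmetric])
    show "{l. mmult h g i l \<noteq> 0} \<subseteq> T"
    proof
      fix l assume l: "l \<in> {l. mmult h g i l \<noteq> 0}"
      show "l \<in> T"
      proof (rule ccontr)
        assume "l \<notin> T"
        then have "g k l = 0" if "k \<in> S" for k using T(2)[OF that] by blast
        then have "mmult h g i l = 0" by (simp add: hg)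
        then show False using l by simp
      qed
    qed
  qed
  finally show ?thesis .
qed

lemma minv_eq_padded:
  assumes x: "padded n x" and y: "padded n y" and xy: "mmult x y = idm" and yx: "mmult y x = idm"
  shows "minv x = y"
  unfolding minv_def
proof (rule the_equality)
  show "finid y \<and> mmult x y = idm \<and> mmult y x = idm"
    using y xy yx finid_pad_id[of n y] by (simp add: padded_def)
next
  fix h assume h: "finid h \<and> mmult x h = idm \<and> mmult h x = idm"
  show "h = y"
  proof (intro ext)
    fix i j
    let ?S = "{k. h i k \<noteq> 0}"
    have fS: "finite ?S" using h finite_row_support by blast
    have row: "{l. x k l \<noteq> 0} \<subseteq> {..<n} \<union> {k}" for k
    proof
      fix l assume "l \<in> {l. x k l \<noteq> 0}"
      then show "l \<in> {..<n} \<union> {k}"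
        using padded_eq_idm[OF x, of k l] by (cases "l < n") (auto simp: idm_def split: if_splits)
    qed
    have "h i j = mmult h idm i j"
      by (subst mmult_eq_sum[of "?S \<union> {j}"]) (use fS in \<open>auto simp: sum_mult_idm_right\<close>)
    also have "\<dots> = mmult (mmult h x) y i j"
      unfolding xy[symmetric]
      by (rule mmult_assoc_entry[of ?S h i "{..<n} \<union> ?S"]) (use fS row in auto)
    also have "\<dots> = y i j" using h by (simp add: mmult_idm_left)
    finally show "h i j = y i j" .
  qed
qed

lemma GLn_if_padded_inverse:
  assumes "padded n x" "padded n y" "mmult x y = idm" "mmult y x = idm"
  shows "x \<in> GLn n"
  unfolding GLn_def GLinf_def
  using finid_pad_id[of n x] finid_pad_id[of n y] assms padded_eq_idm[OF assms(1)]
  by (auto simp: padded_def)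

lemma padded_if_GLn: "g \<in> GLn n \<Longrightarrow> padded n g"
  unfolding GLn_def padded_def pad_id_def by (auto intro!: ext)

lemma GLn_padded_inverse:
  assumes g: "g \<in> GLn n"
  obtains h where "padded n h" "mmult g h = idm" "mmult h g = idm"
proof -
  obtain h where h: "finid h" "mmult g h = idm" "mmult h g = idm"
    using g unfolding GLn_def GLinf_def by blast
  have gout: "g i j = idm i j" if "n \<le> i \<or> n \<le> j" for i j using g that unfolding GLn_def by blast
  have "h i j = idm i j" if "n \<le> i \<or> n \<le> j" for i j
    using that
  proof
    assume i: "n \<le> i"
    have "mmult g h i j = (\<Sum>k\<in>{i}. g i k * h k j)"
      by (rule mmult_eq_sum) (use gout i in \<open>auto simp: idm_def\<close>)
    then show ?thesis using h(2) gout i by (simp add: idm_def)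
  next
    assume j: "n \<le> j"
    let ?S = "{k. h i k \<noteq> 0} \<union> {j}"
    have fS: "finite ?S" using h(1) finite_row_support by blast
    have "mmult h g i j = (\<Sum>k\<in>?S. h i k * g k j)"
      by (rule mmult_eq_sum[OF fS]) auto
    also have "\<dots> = (\<Sum>k\<in>?S. h i k * idm k j)" using gout j by simp
    also have "\<dots> = h i j" by (rule sum_mult_idm_right[OF fS]) simp
    finally show ?thesis using h(3) by simp
  qed
  then have "padded n h" unfolding padded_def pad_id_def by (auto intro!: ext simp: not_less)
  then show ?thesis using that h by blast
qed

lemma GLn_mmult:
  assumes "x \<in> GLn n" "y \<in> GLn n"
  shows "mmult x y \<in> GLn n"
proof -
  obtain hx where hx: "padded n hx" "mmult x hx = idm" "mmult hx x = idm"
    using GLn_padded_inverse[OF assms(1)] by blast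
  obtain hy where hy: "padded n hy" "mmult y hy = idm" "mmult hy y = idm"
    using GLn_padded_inverse[OF assms(2)] by blast
  have x: "padded n x" and y: "padded n y" using assms by (simp_all add: padded_if_GLn)
  have "mmult (mmult x y) (mmult hy hx) = mmult x (mmult (mmult y hy) hx)"
    using x y hx(1) hy(1) by (simp add: padded_mmult_assoc padded_mmult)
  then have xy: "mmult (mmult x y) (mmult hy hx) = idm" using hy(2) hx(2) by (simp add: mmult_idm_left)
  have "mmult (mmult hy hx) (mmult x y) = mmult hy (mmult (mmult hx x) y)"
    using x y hx(1) hy(1) by (simp add: padded_mmult_assoc padded_mmult)
  then have yx: "mmult (mmult hy hx) (mmult x y) = idm" using hy(3) hx(3) by (simp add: mmult_idm_left)
  show ?thesis
    using GLn_if_padded_inverse[OF padded_mmult[OF x y] padded_mmult[OF hy(1) hx(1)] xy yx] .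
qed

lemma GLn_minv:
  assumes "x \<in> GLn n"
  shows "minv x \<in> GLn n"
proof -
  obtain h where h: "padded n h" "mmult x h = idm" "mmult h x = idm"
    using GLn_padded_inverse[OF assms] by blast
  have "padded n x" using assms by (rule padded_if_GLn)
  then show ?thesis
    using minv_eq_padded[OF _ h] GLn_if_padded_inverse[OF h(1) _ h(3,2)] by simp
qed

lemma GLn_conj: "x \<in> GLn n \<Longrightarrow> g \<in> GLn n \<Longrightarrow> mmult (mmult x g) (minv x) \<in> GLn n"
  by (intro GLn_mmult GLn_minv)

lemma mvec_padded_Fn:
  assumes "padded n g" "v \<in> Fn n"
  shows "mvec g v = (\<lambda>k. if k < n then \<Sum>l<n. g k l * v l else 0)"
proof -
  have "mvec g v = mvec (pad_id n g) v" using assms(1) by (simp add: padded_def)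
  also have "\<dots> = (\<lambda>k. if k < n then \<Sum>l<n. g k l * v l else v k)"
    using assms(2) Fn_subset_Finf by (intro mvec_pad_id) blast
  also have "\<dots> = (\<lambda>k. if k < n then \<Sum>l<n. g k l * v l else 0)"
    using assms(2) by (auto simp: Fn_char)
  finally show ?thesis .
qed

lemma mvec_padded_in_Fn: "padded n g \<Longrightarrow> v \<in> Fn n \<Longrightarrow> mvec g v \<in> Fn n"
  by (simp add: mvec_padded_Fn Fn_char)

lemma pair_mvec_mtrans:
  assumes g: "padded n g" and "u \<in> Fn n" "v \<in> Fn n"
  shows "pair u (mvec g v) = pair (mvec (mtrans g) u) v"
proof -
  have "mtrans g = pad_id n (\<lambda>i j. g j i)" using g mtrans_pad_id[of n g] by (simp add: padded_def)
  then have gT: "padded n (mtrans g)" by (simp add: padded_pad_id)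
  have "pair u (mvec g v) = (\<Sum>k<n. u k * (\<Sum>l<n. g k l * v l))"
    using assms by (simp add: pair_Fn_left mvec_padded_Fn)
  also have "\<dots> = (\<Sum>l<n. (\<Sum>k<n. u k * g k l) * v l)"
    by (rule sum_mult_sum_swap[symmetric])
  also have "\<dots> = (\<Sum>l<n. mvec (mtrans g) u l * v l)"
    by (intro sum.cong refl) (simp add: mvec_padded_Fn[OF gT assms(2)], simp add: mtrans_def mult.commute)
  also have "\<dots> = pair (mvec (mtrans g) u) v"
    by (rule pair_Fn_left[OF mvec_padded_in_Fn[OF gT assms(2)], symmetric])
  finally show ?thesis .
qed

section \<open>Change of basis by dual bases\<close>

lemma dual_bases_pad_id_inverse:
  assumes "dual_bases n r f"
  shows "mmult (pad_id n r) (pad_id n (\<lambda>i k. f k i)) = idm"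
    "mmult (pad_id n (\<lambda>i k. f k i)) (pad_id n r) = idm"
proof -
  have "(\<Sum>k<n. r i k * f j k) = idm i j" "(\<Sum>k<n. f k i * r k j) = idm i j"
    if "i < n" "j < n" for i j
  proof -
    have "r i \<in> Fn n" "pair (r i) (f j) = idm i j" "(\<Sum>k<n. f k i * r k j) = idm i j"
      using assms that by (auto simp: dual_bases_def)
    then show "(\<Sum>k<n. r i k * f j k) = idm i j" "(\<Sum>k<n. f k i * r k j) = idm i j"
      by (simp_all add: pair_Fn_left)
  qed
  then have "pad_id n (\<lambda>i j. \<Sum>k<n. r i k * f j k) = pad_id n idm"
    "pad_id n (\<lambda>i j. \<Sum>k<n. f k i * r k j) = pad_id n idm"
    by (auto intro!: pad_id_cong)
  then show "mmult (pad_id n r) (pad_id n (\<lambda>i k. f k i)) = idm"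
    "mmult (pad_id n (\<lambda>i k. f k i)) (pad_id n r) = idm"
    by (simp_all add: mmult_pad_id pad_id_idm)
qed

lemma dual_bases_GLn: "dual_bases n r f \<Longrightarrow> pad_id n r \<in> GLn n"
  using GLn_if_padded_inverse[OF padded_pad_id padded_pad_id] dual_bases_pad_id_inverse by blast

lemma minv_pad_id_dual_bases: "dual_bases n r f \<Longrightarrow> minv (pad_id n r) = pad_id n (\<lambda>i k. f k i)"
  using minv_eq_padded[OF padded_pad_id padded_pad_id] dual_bases_pad_id_inverse by blast

lemma conj_pad_id_dual_bases:
  assumes dual: "dual_bases n r f" and g: "padded n g"
  shows "mmult (mmult (pad_id n r) g) (minv (pad_id n r)) = pad_id n (\<lambda>i j. pair (r i) (mvec g (f j)))"
proof -
  have "mmult (mmult (pad_id n r) (pad_id n g)) (pad_id n (\<lambda>i k. f k i))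
      = pad_id n (\<lambda>i j. \<Sum>l<n. (\<Sum>k<n. r i k * g k l) * f j l)"
    by (simp add: mmult_pad_id)
  also have "\<dots> = pad_id n (\<lambda>i j. pair (r i) (mvec g (f j)))"
  proof (rule pad_id_cong)
    fix i j assume "i < n" "j < n"
    then have ri: "r i \<in> Fn n" and fj: "f j \<in> Fn n" using dual by (auto simp: dual_bases_def)
    have "(\<Sum>l<n. (\<Sum>k<n. r i k * g k l) * f j l) = (\<Sum>k<n. r i k * (\<Sum>l<n. g k l * f j l))"
      by (rule sum_mult_sum_swap)
    also have "\<dots> = (\<Sum>k<n. r i k * mvec g (f j) k)"
      by (intro sum.cong refl) (simp add: mvec_padded_Fn[OF g fj])
    also have "\<dots> = pair (r i) (mvec g (f j))" by (rule pair_Fn_left[OF ri, symmetric])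
    finally show "(\<Sum>l<n. (\<Sum>k<n. r i k * g k l) * f j l) = pair (r i) (mvec g (f j))" .
  qed
  finally show ?thesis
    using g minv_pad_id_dual_bases[OF dual] by (simp add: padded_def)
qed

lemma mvec_pad_id_pair:
  assumes "\<forall>i<n. p i \<in> Fn n" "v \<in> Finf"
  shows "mvec (pad_id n p) v = (\<lambda>i. if i < n then pair (p i) v else v i)"
  using mvec_pad_id[OF assms(2), of n p] assms(1) by (auto simp: pair_Fn_left intro!: ext)

lemma image_mvec_pad_id_subset:
  fixes p q :: "nat \<Rightarrow> nat \<Rightarrow> 'k::field" and U :: "(nat \<Rightarrow> 'k) set"
  assumes pF: "\<forall>i<n. p i \<in> Fn n" and pq: "\<forall>i<n. \<forall>j<n. pair (p i) (q j) = idm i j"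
    and J: "J \<subseteq> {..<n}"
    and U: "fs.subspace U" "U \<subseteq> Finf" "\<forall>i\<ge>n. ev i \<in> U" "U \<inter> Fn n \<subseteq> fs.span (q ` J)"
  shows "mvec (pad_id n p) ` U \<subseteq> fs.span (ev ` (J \<union> {n..}))"
  unfolding span_ev
proof (intro subsetI)
  fix y assume "y \<in> mvec (pad_id n p) ` U"
  then obtain v where v: "v \<in> U" and y: "y = mvec (pad_id n p) v" by blast
  have vF: "v \<in> Finf" using v U(2) by blast
  note mv = mvec_pad_id_pair[OF pF vF]
  have "finite {i. (if i < n then pair (p i) v else v i) \<noteq> 0}"
    by (rule finite_subset[of _ "{..<n} \<union> {i. v i \<noteq> 0}"]) (use vF in \<open>auto simp: Finf_def\<close>)
  then have "y \<in> Finf" using y mv by (simp add: Finf_def)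
  moreover have "i \<in> J \<union> {n..}" if i: "y i \<noteq> 0" for i
  proof (rule ccontr)
    assume "i \<notin> J \<union> {n..}"
    then have iJ: "i < n" "i \<notin> J" by auto
    have "v - tail n v \<in> fs.span (q ` J)"
      using U(4) diff_tail_in_Fn fs.subspace_diff[OF U(1) v tail_in_subspace[OF U(1,3) vF]] by blast
    then have "pair (p i) (v - tail n v) = 0"
      by (rule pair_span_eq_0[rotated]) (use pq iJ J in \<open>auto simp: idm_def\<close>)
    then have "pair (p i) v = 0"
      using pair_tail[of "p i" n v] pF iJ by (simp add: pair_diff_right)
    then show False using i y mv iJ by simp
  qed
  ultimately show "y \<in> {z \<in> Finf. \<forall>i. z i \<noteq> 0 \<longrightarrow> i \<in> J \<union> {n..}}" by blast
qed

lemma span_ev_subset_image_mvec_pad_id: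
  fixes p q :: "nat \<Rightarrow> nat \<Rightarrow> 'k::field" and U :: "(nat \<Rightarrow> 'k) set"
  assumes pF: "\<forall>i<n. p i \<in> Fn n" and qF: "\<forall>i<n. q i \<in> Fn n"
    and pq: "\<forall>i<n. \<forall>j<n. pair (p i) (q j) = idm i j" and J: "J \<subseteq> {..<n}"
    and U: "fs.subspace U" "U \<subseteq> Finf" "\<forall>i\<ge>n. ev i \<in> U" "fs.span (q ` J) \<subseteq> U"
  shows "fs.span (ev ` (J \<union> {n..})) \<subseteq> mvec (pad_id n p) ` U"
  unfolding span_ev
proof (intro subsetI)
  fix z :: "nat \<Rightarrow> 'k" assume "z \<in> {z \<in> Finf. \<forall>i. z i \<noteq> 0 \<longrightarrow> i \<in> J \<union> {n..}}"
  then have z: "z \<in> Finf" "\<forall>i. z i \<noteq> 0 \<longrightarrow> i \<in> J \<union> {n..}" by auto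
  define v where "v = (\<Sum>j\<in>J. fscale (z j) (q j)) + tail n z"
  have "(\<Sum>j\<in>J. fscale (z j) (q j)) \<in> fs.span (q ` J)"
    by (intro fs.span_sum fs.span_scale fs.span_base) auto
  then have vU: "v \<in> U"
    unfolding v_def using U(4) fs.subspace_add[OF U(1) _ tail_in_subspace[OF U(1,3) z(1)]] by blast
  have vF: "v \<in> Finf" using vU U(2) by blast
  have "mvec (pad_id n p) v i = z i" for i
  proof (cases "i < n")
    case True
    have "pair (p i) (\<Sum>j\<in>J. fscale (z j) (q j)) = (\<Sum>j\<in>J. z j * idm i j)"
      using pq True J by (auto simp: pair_sum_right pair_scale_right intro!: sum.cong)
    also have "\<dots> = (if i \<in> J then z i else 0)"
      using finite_subset[OF J] by (simp add: idm_def if_distrib sum.delta' cong: if_cong)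
    finally have "pair (p i) v = (if i \<in> J then z i else 0)"
      using pair_tail[of "p i" n z] pF True by (simp add: v_def pair_add_right)
    also have "\<dots> = z i" using z(2) True by auto
    finally show ?thesis using mvec_pad_id_pair[OF pF vF] True by simp
  next
    case False
    have "(\<Sum>j\<in>J. fscale (z j) (q j)) i = 0"
      using qF J False by (auto simp: sum_fun_apply Fn_char intro!: sum.neutral)
    then have "v i = z i" using False by (simp add: v_def tail_def)
    then show ?thesis using mvec_pad_id_pair[OF pF vF] False by simp
  qed
  then have "mvec (pad_id n p) v = z" by (rule ext)
  then show "z \<in> mvec (pad_id n p) ` U" using vU by blast
qed

lemma image_mvec_pad_id:
  fixes p q :: "nat \<Rightarrow> nat \<Rightarrow> 'k::field" and U :: "(nat \<Rightarrow> 'k) set"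
  assumes "\<forall>i<n. p i \<in> Fn n" and "\<forall>i<n. q i \<in> Fn n"
    and "\<forall>i<n. \<forall>j<n. pair (p i) (q j) = idm i j" and "J \<subseteq> {..<n}"
    and "fs.subspace U" "U \<subseteq> Finf" "\<forall>i\<ge>n. ev i \<in> U" "U \<inter> Fn n = fs.span (q ` J)"
  shows "mvec (pad_id n p) ` U = fs.span (ev ` (J \<union> {n..}))"
proof (rule equalityI)
  show "mvec (pad_id n p) ` U \<subseteq> fs.span (ev ` (J \<union> {n..}))"
    by (rule image_mvec_pad_id_subset) (use assms in auto)
  show "fs.span (ev ` (J \<union> {n..})) \<subseteq> mvec (pad_id n p) ` U"
    by (rule span_ev_subset_image_mvec_pad_id) (use assms in auto)
qed

section \<open>Bounding triples\<close>

lemma BT_D: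
  assumes "(W, g, V) \<in> BT n"
  shows "fs.subspace W" "W \<subseteq> Finf" "\<forall>i\<ge>n. ev i \<in> W"
    and "fs.subspace V" "V \<subseteq> Finf" "\<forall>i\<ge>n. ev i \<in> V"
    and "\<forall>v\<in>V. mvec g v = v" "\<forall>w\<in>W. mvec (mtrans g) w = w"
  using assms unfolding BT_def bounding_triple_def smooth_def subsp_def by auto

lemma BT_GLn:
  assumes "(W, g, V) \<in> BT n"
  shows "g \<in> GLn n"
proof -
  note B = BT_D[OF assms]
  have "g i j = idm i j" if "n \<le> i \<or> n \<le> j" for i j
    using that
  proof
    assume i: "n \<le> i"
    have "mvec (mtrans g) (ev i) j = ev i j" using B(3,8) i by simp
    moreover have "mvec (mtrans g) (ev i) j = (\<Sum>k\<in>{i}. mtrans g j k * ev i k)"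
      by (rule mvec_eq_sum) (auto simp: ev_def)
    ultimately show ?thesis by (auto simp: mtrans_def ev_def idm_def split: if_splits)
  next
    assume j: "n \<le> j"
    have "mvec g (ev j) i = ev j i" using B(6,7) j by simp
    moreover have "mvec g (ev j) i = (\<Sum>k\<in>{j}. g i k * ev j k)"
      by (rule mvec_eq_sum) (auto simp: ev_def)
    ultimately show ?thesis by (auto simp: ev_def idm_def split: if_splits)
  qed
  then show ?thesis
    using assms unfolding GLn_def BT_def bounding_triple_def by blast
qed

lemma perpR_eq_perpL:
  assumes "W \<subseteq> Finf"
  shows "perpR W = perpL W"
proof -
  have "pair w v = pair v w" if "w \<in> W" "v \<in> Finf" for w v
    using pair_commute[of w v] that assms by blast
  then show ?thesis unfolding perpR_def perpL_def by auto
qed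

lemma Int_perpL_eq_perp_on:
  assumes X: "fs.subspace X" "X \<subseteq> Finf" "\<forall>i\<ge>n. ev i \<in> X"
  shows "Y \<inter> perpL X = perp_on (X \<inter> Fn n) (Y \<inter> Fn n)"
proof
  show "Y \<inter> perpL X \<subseteq> perp_on (X \<inter> Fn n) (Y \<inter> Fn n)"
  proof
    fix w assume w: "w \<in> Y \<inter> perpL X"
    then have wF: "w \<in> Finf" and wo: "\<forall>x\<in>X. pair w x = 0" by (auto simp: perpL_def)
    have "w i = 0" if "n \<le> i" for i
      using wo[rule_format, of "ev i"] X(3) that pair_ev_right[OF wF, of i] by simp
    then have "w \<in> Fn n" by (simp add: Fn_char)
    moreover have "pair s w = 0" if "s \<in> X \<inter> Fn n" for s
      using wo that pair_commute[OF wF, of s] X(2) by auto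
    ultimately show "w \<in> perp_on (X \<inter> Fn n) (Y \<inter> Fn n)" using w by (auto simp: perp_on_def)
  qed
  show "perp_on (X \<inter> Fn n) (Y \<inter> Fn n) \<subseteq> Y \<inter> perpL X"
  proof
    fix w assume w: "w \<in> perp_on (X \<inter> Fn n) (Y \<inter> Fn n)"
    then have wY: "w \<in> Y" and wn: "w \<in> Fn n" and wo: "\<forall>s\<in>X \<inter> Fn n. pair s w = 0"
      by (auto simp: perp_on_def)
    have wF: "w \<in> Finf" using wn Fn_subset_Finf by blast
    have "pair w x = 0" if x: "x \<in> X" for x
    proof -
      have xF: "x \<in> Finf" using x X(2) by blast
      have "x - tail n x \<in> X \<inter> Fn n"
        using fs.subspace_diff[OF X(1) x tail_in_subspace[OF X(1,3) xF]] diff_tail_in_Fn by blast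
      then have "pair w (x - tail n x) = 0"
        using wo pair_commute[OF wF, of "x - tail n x"] Fn_subset_Finf by auto
      then show ?thesis using pair_tail[OF wn, of x] by (simp add: pair_diff_right)
    qed
    then show "w \<in> Y \<inter> perpL X" using wY wF by (auto simp: perpL_def)
  qed
qed

lemma BT_adapted_dual_bases:
  fixes W V :: "(nat \<Rightarrow> 'k::{field,finite}) set"
  assumes BT: "(W, g, V) \<in> BT n"
    and a: "a = fs.dim (W \<inter> perpL V)" and b: "b = fs.dim (V \<inter> perpR W)"
    and c: "c = pairing_rank (W \<inter> Fn n) (V \<inter> Fn n)"
  obtains r f where "dual_bases n r f" "V \<inter> Fn n = fs.span (f ` {n - b - c..<n})"
    "W \<inter> Fn n = fs.span (r ` ({..<a} \<union> {n - c..<n}))" "a + b + c \<le> n"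
proof -
  note B = BT_D[OF BT]
  have W0: "fs.subspace (W \<inter> Fn n)" "W \<inter> Fn n \<subseteq> Fn n"
    and V0: "fs.subspace (V \<inter> Fn n)" "V \<inter> Fn n \<subseteq> Fn n"
    using B(1,4) subspace_Fn by (auto intro: fs.subspace_inter)
  have "a = fs.dim (perp_on (V \<inter> Fn n) (W \<inter> Fn n))"
    using a Int_perpL_eq_perp_on[OF B(4-6)] by simp
  moreover have b': "b = fs.dim (perp_on (W \<inter> Fn n) (V \<inter> Fn n))"
    using b perpR_eq_perpL[OF B(2)] Int_perpL_eq_perp_on[OF B(1-3)] by simp
  moreover have "c = fs.dim (V \<inter> Fn n) - b"
    using c b' by (simp add: pairing_rank_def perp_on_def)
  ultimately show ?thesis using adapted_dual_bases[OF W0 V0] that by blast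
qed

lemma act_pad_id_dual_bases:
  assumes BT: "(W, g, V) \<in> BT n" and dual: "dual_bases n r f"
    and I: "I \<subseteq> {..<n}" "W \<inter> Fn n = fs.span (r ` I)"
    and J: "J \<subseteq> {..<n}" "V \<inter> Fn n = fs.span (f ` J)"
  shows "act (pad_id n r) (W, g, V) = (fs.span (ev ` (I \<union> {n..})),
    pad_id n (\<lambda>i j. pair (r i) (mvec g (f j))), fs.span (ev ` (J \<union> {n..})))"
proof -
  note B = BT_D[OF BT]
  have rF: "\<forall>i<n. r i \<in> Fn n" and fF: "\<forall>i<n. f i \<in> Fn n"
    and rf: "\<forall>i<n. \<forall>j<n. pair (r i) (f j) = idm i j"
    using dual by (auto simp: dual_bases_def)
  have fr: "\<forall>i<n. \<forall>j<n. pair (f i) (r j) = idm i j"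
  proof (intro allI impI)
    fix i j assume ij: "i < n" "j < n"
    have "f i \<in> Finf" "r j \<in> Finf" using rF fF ij Fn_subset_Finf by blast+
    then have "pair (f i) (r j) = pair (r j) (f i)" by (rule pair_commute)
    then show "pair (f i) (r j) = idm i j" using rf ij by (simp add: idm_def)
  qed
  have "mtrans (minv (pad_id n r)) = pad_id n f"
    using minv_pad_id_dual_bases[OF dual] by (simp add: mtrans_pad_id)
  then show ?thesis
    unfolding act_def
    using conj_pad_id_dual_bases[OF dual padded_if_GLn[OF BT_GLn[OF BT]]]
      image_mvec_pad_id[OF fF rF fr I(1) B(1-3) I(2)] image_mvec_pad_id[OF rF fF rf J(1) B(4-6) J(2)]
    by simp
qed

lemma pad_id_dual_bases_entries:
  assumes BT: "(W, g, V) \<in> BT n" and dual: "dual_bases n r f"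
    and I: "I \<subseteq> {..<n}" "W \<inter> Fn n = fs.span (r ` I)"
    and J: "V \<inter> Fn n = fs.span (f ` J)"
  shows "i \<in> I \<Longrightarrow> pad_id n (\<lambda>i j. pair (r i) (mvec g (f j))) i j = idm i j"
    and "j \<in> J \<union> {n..} \<Longrightarrow> pad_id n (\<lambda>i j. pair (r i) (mvec g (f j))) i j = idm i j"
proof -
  note B = BT_D[OF BT]
  have g: "padded n g" by (rule padded_if_GLn[OF BT_GLn[OF BT]])
  have rF: "r i \<in> Fn n" and fF: "f j \<in> Fn n" and rf: "pair (r i) (f j) = idm i j"
    if "i < n" "j < n" for i j
    using dual that by (auto simp: dual_bases_def)
  show "pad_id n (\<lambda>i j. pair (r i) (mvec g (f j))) i j = idm i j" if i: "i \<in> I"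
  proof (cases "j < n")
    case True
    have "r i \<in> W" using I(2) i fs.span_base[of "r i" "r ` I"] by blast
    then have "mvec (mtrans g) (r i) = r i" using B(8) by blast
    moreover have "i < n" using i I(1) by blast
    ultimately show ?thesis
      using True pair_mvec_mtrans[OF g rF fF] rf by (simp add: pad_id_def)
  qed (simp add: pad_id_def)
  show "pad_id n (\<lambda>i j. pair (r i) (mvec g (f j))) i j = idm i j" if j: "j \<in> J \<union> {n..}"
  proof (cases "i < n \<and> j < n")
    case True
    then have "j \<in> J" using j by auto
    then have "f j \<in> V" using J fs.span_base[of "f j" "f ` J"] by blast
    then show ?thesis using True B(7) rf by (simp add: pad_id_def)
  qed (auto simp: pad_id_def)
qed

theorem proposition4p9:
  fixes W V :: "(nat \<Rightarrow> 'a::{field,finite}) set" and g :: "nat \<Rightarrow> nat \<Rightarrow> 'a" and n a b c :: nat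
  assumes "(W, g, V) \<in> BT n"
    and "a = fs.dim (W \<inter> perpL V)"
    and "b = fs.dim (V \<inter> perpR W)"
    and "c = pairing_rank (W \<inter> Fn n) (V \<inter> Fn n)"
  shows "\<exists>x \<in> GLn n. \<exists>W' g' V'. act x (W, g, V) = (W', g', V') \<and>
           a + b + c \<le> n \<and>
           V' = fs.span (ev ` ({n - b - c..<n - c} \<union> {n - c..})) \<and>
           W' = fs.span (ev ` ({..<a} \<union> {n - c..})) \<and>
           g' \<in> GLn n \<and>
           (\<forall>i<a. \<forall>j. g' i j = idm i j) \<and>
           (\<forall>i\<in>{a..<n - b - c}. \<forall>j\<ge>n - b - c. g' i j = 0) \<and>
           (\<forall>i\<in>{n - b - c..<n - c}. \<forall>j\<ge>n - b - c. g' i j = idm i j) \<and>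
           (\<forall>i\<in>{n - c..<n}. \<forall>j. g' i j = idm i j)"
proof -
  obtain r f where dual: "dual_bases n r f" and V0: "V \<inter> Fn n = fs.span (f ` {n - b - c..<n})"
    and W0: "W \<inter> Fn n = fs.span (r ` ({..<a} \<union> {n - c..<n}))" and abc: "a + b + c \<le> n"
    using BT_adapted_dual_bases[OF assms] by blast
  let ?x = "pad_id n r" and ?g' = "pad_id n (\<lambda>i j. pair (r i) (mvec g (f j)))"
  have I: "{..<a} \<union> {n - c..<n} \<subseteq> {..<n}" and J: "{n - b - c..<n} \<subseteq> {..<n}" using abc by auto
  have "act ?x (W, g, V) = (fs.span (ev ` ({..<a} \<union> {n - c..})), ?g',
      fs.span (ev ` ({n - b - c..<n - c} \<union> {n - c..})))"
  proof -
    have "{..<a} \<union> {n - c..<n} \<union> {n..} = {..<a} \<union> {n - c..}"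
      "{n - b - c..<n} \<union> {n..} = {n - b - c..<n - c} \<union> {n - c..}" by auto
    then show ?thesis using act_pad_id_dual_bases[OF assms(1) dual I W0 J V0] by simp
  qed
  moreover have "?g' \<in> GLn n"
    using conj_pad_id_dual_bases[OF dual padded_if_GLn] GLn_conj[OF dual_bases_GLn[OF dual]]
      BT_GLn[OF assms(1)] by metis
  moreover have "?g' i j = idm i j" if "i < a \<or> n - c \<le> i \<and> i < n \<or> n - b - c \<le> j" for i j
  proof -
    have "i \<in> {..<a} \<union> {n - c..<n} \<or> j \<in> {n - b - c..<n} \<union> {n..}" using that by auto
    then show ?thesis using pad_id_dual_bases_entries[OF assms(1) dual I W0 V0] by blast
  qed
  ultimately show ?thesis
    using dual_bases_GLn[OF dual] abc by (intro bexI[of _ ?x]) (auto simp: idm_def)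
qed

end
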